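(* For every pure context $F$, term $t$ and variables $k,k',x$ with $k'\notin\mathrm{fv}(F)\cup\mathrm{fv}(t)$ and $x\notin\mathrm{fv}(F)$, we have $F[\mathcal{S}k.t] \approx \mathcal{S}k'.\,t\{\lambda x.\langle k'\,F[x]\rangle/k\}$.
   Context: The calculus $\lambda_{\mathcal S}$. Terms: $t ::= x \mid \lambda x.t \mid t\,t \mid \mathcal{S}k.t \mid \langle t\rangle$ (shift and reset); values: $v ::= \lambda x.t \mid x$. $\lambda x.t$ binds $x$, $\mathcal{S}k.t$ binds $k$; terms up to $\alpha$-conversion; $\mathrm{fv}$ free variables; capture-avoiding substitution $t\{v/x\}$. Pure contexts $F ::= [\,] \mid v\,F \mid F\,t$; evaluation contexts $E ::= [\,] \mid v\,E \mid E\,t \mid \langle E\rangle$. Reduction: $E[(\lambda x.t)\,v] \to E[t\{v/x\}]$; $E[\langle F[\mathcal{S}k.t]\rangle] \to E[\langle t\{\lambda x.\langle F[x]\rangle/k\}\rangle]$ ($x\notin\mathrm{fv}(F)$); $E[\langle v\rangle]\to E[v]$. $t\Downarrow t'$ iff $t\to^*t'$ and $t'$ irreducible. Normal forms: values, control stuck terms $F[\mathcal{S}k.t]$, open stuck terms $E[x\,v]$. Fresh: not free in the terms/contexts considered. Refined normal form bisimilarity $\approx$: for a relation $\mathcal R$ on terms, $E_0\mathrel{\mathcal R}E_1$ iff either $E_0=E_0'[\langle F_0\rangle]$, $E_1=E_1'[\langle F_1\rangle]$ ($F_i$ pure) with $E_0'[x]\mathrel{\mathcal R}E_1'[x]$ and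 $\langle F_0[x]\rangle\mathrel{\mathcal R}\langle F_1[x]\rangle$ ($x$ fresh), or $E_0=F_0$, $E_1=F_1$ pure with $F_0[x]\mathrel{\mathcal R}F_1[x]$ ($x$ fresh). $v\mathbin{@}y$ is $x\,y$ if $v=x$, $t\{y/x\}$ if $v=\lambda x.t$. $\mathcal R^{\mathrm{rnf}}$ on normal forms: $v_0\mathrel{\mathcal R^{\mathrm{rnf}}}v_1$ if $v_0\mathbin{@}x\mathrel{\mathcal R}v_1\mathbin{@}x$ ($x$ fresh); $E_0[x\,v_0]\mathrel{\mathcal R^{\mathrm{rnf}}}E_1[x\,v_1]$ if $E_0\mathrel{\mathcal R}E_1$ and $v_0\mathrel{\mathcal R^{\mathrm{rnf}}}v_1$; $F_0[\mathcal{S}k.t_0]\mathrel{\mathcal R^{\mathrm{rnf}}}F_1[\mathcal{S}k.t_1]$ if $\langle t_0\{\lambda x.\langle k'\,F_0[x]\rangle/k\}\rangle\mathrel{\mathcal R}\langle t_1\{\lambda x.\langle k'\,F_1[x]\rangle/k\}\rangle$ for fresh $k',x$. $\mathcal R$ is a refined normal form simulation if $t_0\mathrel{\mathcal R}t_1$ and $t_0\Downarrow t_0'$ imply $t_1\Downarrow t_1'$ with $t_0'\mathrel{\mathcal R^{\mathrm{rnf}}}t_1'$; a refined bisimulation if $\mathcal R$ and $\mathcal R^{-1}$ are refined simulations; $\approx$ is the largest refined normal form bisimulation. *)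

theory Defs
  imports Main
begin

datatype trm = Var nat | Lam nat trm | App trm trm | Shift nat trm | Reset trm

primrec fv :: "trm \<Rightarrow> nat set" where
  "fv (Var x) = {x}"
| "fv (Lam x t) = fv t - {x}"
| "fv (App t u) = fv t \<union> fv u"
| "fv (Shift k t) = fv t - {k}"
| "fv (Reset t) = fv t"

definition fresh :: "nat set \<Rightarrow> nat" where
  "fresh A = (LEAST n. n \<notin> A)"

primrec sub :: "(nat \<Rightarrow> trm) \<Rightarrow> trm \<Rightarrow> trm" where
  "sub \<sigma> (Var x) = \<sigma> x"
| "sub \<sigma> (App t u) = App (sub \<sigma> t) (sub \<sigma> u)"
| "sub \<sigma> (Lam y t) =
     (let z = fresh (\<Union>w\<in>fv t - {y}. fv (\<sigma> w)) in Lam z (sub (\<sigma>(y := Var z)) t))"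
| "sub \<sigma> (Shift y t) =
     (let z = fresh (\<Union>w\<in>fv t - {y}. fv (\<sigma> w)) in Shift z (sub (\<sigma>(y := Var z)) t))"
| "sub \<sigma> (Reset t) = Reset (sub \<sigma> t)"

definition subst :: "trm \<Rightarrow> nat \<Rightarrow> trm \<Rightarrow> trm" where
  "subst v x t = sub (Var(x := v)) t"

fun is_val :: "trm \<Rightarrow> bool" where
  "is_val (Var _) = True"
| "is_val (Lam _ _) = True"
| "is_val _ = False"

datatype ctx = Hole | CAppR trm ctx | CAppL ctx trm | CReset ctx

primrec plug :: "ctx \<Rightarrow> trm \<Rightarrow> trm" where
  "plug Hole t = t"
| "plug (CAppR v C) t = App v (plug C t)"
| "plug (CAppL C u) t = App (plug C t) u"
| "plug (CReset C) t = Reset (plug C t)"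

primrec ccomp :: "ctx \<Rightarrow> ctx \<Rightarrow> ctx" where
  "ccomp Hole D = D"
| "ccomp (CAppR v C) D = CAppR v (ccomp C D)"
| "ccomp (CAppL C u) D = CAppL (ccomp C D) u"
| "ccomp (CReset C) D = CReset (ccomp C D)"

primrec fvc :: "ctx \<Rightarrow> nat set" where
  "fvc Hole = {}"
| "fvc (CAppR v C) = fv v \<union> fvc C"
| "fvc (CAppL C u) = fvc C \<union> fv u"
| "fvc (CReset C) = fvc C"

primrec is_ectx :: "ctx \<Rightarrow> bool" where
  "is_ectx Hole = True"
| "is_ectx (CAppR v C) = (is_val v \<and> is_ectx C)"
| "is_ectx (CAppL C u) = is_ectx C"
| "is_ectx (CReset C) = is_ectx C"

primrec is_pctx :: "ctx \<Rightarrow> bool" where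
  "is_pctx Hole = True"
| "is_pctx (CAppR v C) = (is_val v \<and> is_pctx C)"
| "is_pctx (CAppL C u) = is_pctx C"
| "is_pctx (CReset C) = False"

inductive step :: "trm \<Rightarrow> trm \<Rightarrow> bool" where
  beta: "is_ectx E \<Longrightarrow> is_val v \<Longrightarrow>
     step (plug E (App (Lam x t) v)) (plug E (subst v x t))"
| shift: "is_ectx E \<Longrightarrow> is_pctx F \<Longrightarrow> x \<notin> fvc F \<Longrightarrow>
     step (plug E (Reset (plug F (Shift k t))))
          (plug E (Reset (subst (Lam x (Reset (plug F (Var x)))) k t)))"
| reset: "is_ectx E \<Longrightarrow> is_val v \<Longrightarrow> step (plug E (Reset v)) (plug E v)"

definition irreducible :: "trm \<Rightarrow> bool" where
  "irreducible t = (\<not> (\<exists>t'. step t t'))"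

definition eval :: "trm \<Rightarrow> trm \<Rightarrow> bool" where
  "eval t t' = (step\<^sup>*\<^sup>* t t' \<and> irreducible t')"

definition ctx_rel :: "(trm \<Rightarrow> trm \<Rightarrow> bool) \<Rightarrow> ctx \<Rightarrow> ctx \<Rightarrow> bool" where
  "ctx_rel R E0 E1 =
    ((\<exists>E0' F0 E1' F1 x. is_ectx E0' \<and> is_pctx F0 \<and> is_ectx E1' \<and> is_pctx F1 \<and>
        E0 = ccomp E0' (CReset F0) \<and> E1 = ccomp E1' (CReset F1) \<and>
        x \<notin> fvc E0 \<and> x \<notin> fvc E1 \<and>
        R (plug E0' (Var x)) (plug E1' (Var x)) \<and>
        R (Reset (plug F0 (Var x))) (Reset (plug F1 (Var x))))
     \<or> (is_pctx E0 \<and> is_pctx E1 \<and>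
        (\<exists>x. x \<notin> fvc E0 \<and> x \<notin> fvc E1 \<and> R (plug E0 (Var x)) (plug E1 (Var x)))))"

fun vapp :: "trm \<Rightarrow> nat \<Rightarrow> trm" where
  "vapp (Var x) y = App (Var x) (Var y)"
| "vapp (Lam x t) y = subst (Var y) x t"
| "vapp t y = App t (Var y)"

inductive rnf :: "(trm \<Rightarrow> trm \<Rightarrow> bool) \<Rightarrow> trm \<Rightarrow> trm \<Rightarrow> bool" for R where
  rnf_val: "is_val v0 \<Longrightarrow> is_val v1 \<Longrightarrow> x \<notin> fv v0 \<Longrightarrow> x \<notin> fv v1 \<Longrightarrow>
     R (vapp v0 x) (vapp v1 x) \<Longrightarrow> rnf R v0 v1"
| rnf_open: "is_ectx E0 \<Longrightarrow> is_ectx E1 \<Longrightarrow> is_val v0 \<Longrightarrow> is_val v1 \<Longrightarrow>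
     ctx_rel R E0 E1 \<Longrightarrow> rnf R v0 v1 \<Longrightarrow>
     rnf R (plug E0 (App (Var x) v0)) (plug E1 (App (Var x) v1))"
| rnf_ctrl: "is_pctx F0 \<Longrightarrow> is_pctx F1 \<Longrightarrow>
     k' \<notin> fv (plug F0 (Shift k0 t0)) \<Longrightarrow> k' \<notin> fv (plug F1 (Shift k1 t1)) \<Longrightarrow>
     x \<notin> fv (plug F0 (Shift k0 t0)) \<Longrightarrow> x \<notin> fv (plug F1 (Shift k1 t1)) \<Longrightarrow> x \<noteq> k' \<Longrightarrow>
     R (Reset (subst (Lam x (Reset (App (Var k') (plug F0 (Var x))))) k0 t0))
       (Reset (subst (Lam x (Reset (App (Var k') (plug F1 (Var x))))) k1 t1)) \<Longrightarrow>
     rnf R (plug F0 (Shift k0 t0)) (plug F1 (Shift k1 t1))"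

definition rnf_sim :: "(trm \<Rightarrow> trm \<Rightarrow> bool) \<Rightarrow> bool" where
  "rnf_sim R = (\<forall>t0 t1 t0'. R t0 t1 \<longrightarrow> eval t0 t0' \<longrightarrow>
                   (\<exists>t1'. eval t1 t1' \<and> rnf R t0' t1'))"

definition rnf_bisim :: "(trm \<Rightarrow> trm \<Rightarrow> bool) \<Rightarrow> bool" where
  "rnf_bisim R = (rnf_sim R \<and> rnf_sim (conversep R))"

definition rnf_bisimilar :: "trm \<Rightarrow> trm \<Rightarrow> bool" where
  "rnf_bisimilar t0 t1 = (\<exists>R. rnf_bisim R \<and> R t0 t1)"

end

theory Submission
  imports Defs
begin

text \<open>Both sides are control-stuck, so by the control clause of the normal-form relation it suffices
  to relate, for fresh \<open>K\<close> and \<open>y\<close>, the terms \<open>\<langle>t{\<lambda>y.\<langle>K F[y]\<rangle>/k}\<rangle>\<close> and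
  \<open>\<langle>t{\<lambda>x.\<langle>k' F[x]\<rangle>/k}{\<lambda>y.\<langle>K y\<rangle>/k'}\<rangle>\<close>. Up to renaming, the second is the first with some
  subterms \<open>\<langle>K m\<rangle>\<close> replaced by \<open>\<langle>(\<lambda>y.\<langle>K y\<rangle>) m\<rangle>\<close>. This correspondence is preserved by
  reduction, except when the right-hand side contracts such an eta-redex: then \<open>E0[\<langle>K v\<rangle>]\<close> faces
  \<open>E1[\<langle>\<langle>K v\<rangle>\<rangle>]\<close>, both open stuck terms, which are related as normal forms once the
  correspondence is extended by the pairs \<open>(E0[z], E1[\<langle>z\<rangle>])\<close>. The extended relation is a refined
  normal form bisimulation.\<close>

section \<open>Free variables and substitution\<close>

lemma finite_fv [simp]: "finite (fv t)"
  by (induct t) auto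

lemma finite_fvc [simp]: "finite (fvc C)"
  by (induct C) auto

lemma fresh_notin: "finite A \<Longrightarrow> fresh A \<notin> A"
  unfolding fresh_def by (metis LeastI_ex ex_new_if_finite infinite_UNIV_nat)

definition is_binder :: "(nat \<Rightarrow> trm \<Rightarrow> trm) \<Rightarrow> bool" where
  "is_binder B \<longleftrightarrow> B = Lam \<or> B = Shift"

lemma binder_Lam [simp]: "is_binder Lam" and binder_Shift [simp]: "is_binder Shift"
  by (simp_all add: is_binder_def)

lemma trm_binder_induct [case_names Var App Reset Binder]:
  assumes "\<And>x. P (Var x)" and "\<And>t u. P t \<Longrightarrow> P u \<Longrightarrow> P (App t u)" and "\<And>t. P t \<Longrightarrow> P (Reset t)"
    and "\<And>B y t. is_binder B \<Longrightarrow> P t \<Longrightarrow> P (B y t)"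
  shows "P t"
  using assms by (induct t) auto

lemma fv_binder [simp]: "is_binder B \<Longrightarrow> fv (B y t) = fv t - {y}"
  by (auto simp: is_binder_def)

lemma size_binder [simp]: "is_binder B \<Longrightarrow> size (B y t) = Suc (size t)"
  by (auto simp: is_binder_def)

lemma sub_binder:
  "is_binder B \<Longrightarrow> sub \<sigma> (B y t) =
     (let z = fresh (\<Union>w\<in>fv t - {y}. fv (\<sigma> w)) in B z (sub (\<sigma>(y := Var z)) t))"
  by (auto simp: is_binder_def)

lemma fresh_bound: "fresh (\<Union>w\<in>fv t - {y}. fv (\<sigma> w)) \<notin> (\<Union>w\<in>fv t - {y}. fv (\<sigma> w))"
  by (rule fresh_notin) simp

lemma fv_sub: "fv (sub \<sigma> t) = (\<Union>w\<in>fv t. fv (\<sigma> w))"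
proof (induct t arbitrary: \<sigma> rule: trm_binder_induct)
  case (Binder B y t)
  then show ?case
    using fresh_bound[where t=t and y=y and \<sigma>=\<sigma>] by (auto simp: sub_binder Let_def split: if_split_asm)
qed auto

lemma fv_rename_bound: "z \<notin> fv t - {x} \<Longrightarrow> fv (sub (Var(x := Var z)) t) - {z} = fv t - {x}"
  by (auto simp: fv_sub split: if_split_asm)

lemma sub_cong: "(\<And>w. w \<in> fv t \<Longrightarrow> \<sigma> w = \<tau> w) \<Longrightarrow> sub \<sigma> t = sub \<tau> t"
proof (induct t arbitrary: \<sigma> \<tau> rule: trm_binder_induct)
  case (Binder B y t)
  have eq: "\<And>w. w \<in> fv t - {y} \<Longrightarrow> \<sigma> w = \<tau> w"
    using Binder.prems Binder.hyps(1) by simp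
  then have "(\<Union>w\<in>fv t - {y}. fv (\<sigma> w)) = (\<Union>w\<in>fv t - {y}. fv (\<tau> w))"
    by (metis (no_types) SUP_cong)
  moreover have "sub (\<sigma>(y := Var z)) t = sub (\<tau>(y := Var z)) t" for z
    by (rule Binder.hyps(2)) (use eq in auto)
  ultimately show ?case
    using Binder.hyps(1) by (simp add: sub_binder Let_def)
next
  case (App t u)
  then show ?case by (metis UnCI fv.simps(3) sub.simps(2))
next
  case (Reset t)
  then show ?case by (metis fv.simps(5) sub.simps(5))
qed simp

lemma sub_comp: "sub \<sigma> (sub \<tau> t) = sub (\<lambda>w. sub \<sigma> (\<tau> w)) t"
proof (induct t arbitrary: \<sigma> \<tau> rule: trm_binder_induct)
  case (Binder B y t)
  define z1 where "z1 = fresh (\<Union>w\<in>fv t - {y}. fv (\<tau> w))"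
  define z where "z = fresh (\<Union>w\<in>fv t - {y}. fv (sub \<sigma> (\<tau> w)))"
  have z1: "z1 \<notin> (\<Union>w\<in>fv t - {y}. fv (\<tau> w))"
    unfolding z1_def by (rule fresh_bound)
  then have "fv (sub (\<tau>(y := Var z1)) t) - {z1} = (\<Union>w\<in>fv t - {y}. fv (\<tau> w))"
    by (auto simp: fv_sub split: if_split_asm)
  then have "(\<Union>u\<in>fv (sub (\<tau>(y := Var z1)) t) - {z1}. fv (\<sigma> u)) = (\<Union>w\<in>fv t - {y}. fv (sub \<sigma> (\<tau> w)))"
    by (auto simp: fv_sub)
  then have "sub \<sigma> (sub \<tau> (B y t)) = B z (sub (\<sigma>(z1 := Var z)) (sub (\<tau>(y := Var z1)) t))"
    using Binder.hyps(1) by (simp add: sub_binder Let_def z1_def z_def)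
  also have "sub (\<sigma>(z1 := Var z)) (sub (\<tau>(y := Var z1)) t) = sub ((\<lambda>w. sub \<sigma> (\<tau> w))(y := Var z)) t"
    unfolding Binder.hyps(2)
  proof (rule sub_cong)
    fix w assume "w \<in> fv t"
    then show "sub (\<sigma>(z1 := Var z)) ((\<tau>(y := Var z1)) w) = ((\<lambda>w. sub \<sigma> (\<tau> w))(y := Var z)) w"
      using z1 by (cases "w = y") (auto intro!: sub_cong)
  qed
  finally show ?case
    using Binder.hyps(1) by (simp add: sub_binder Let_def z_def)
qed auto

lemma size_rename: "(\<And>w. \<exists>u. \<sigma> w = Var u) \<Longrightarrow> size (sub \<sigma> t) = size t"
proof (induct t arbitrary: \<sigma> rule: trm_binder_induct)
  case (Var x)
  then obtain u where "\<sigma> x = Var u" by blast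
  then show ?case by simp
qed (auto simp: sub_binder Let_def)

section \<open>Contexts\<close>

primrec subc :: "(nat \<Rightarrow> trm) \<Rightarrow> ctx \<Rightarrow> ctx" where
  "subc \<sigma> Hole = Hole"
| "subc \<sigma> (CAppR v C) = CAppR (sub \<sigma> v) (subc \<sigma> C)"
| "subc \<sigma> (CAppL C u) = CAppL (subc \<sigma> C) (sub \<sigma> u)"
| "subc \<sigma> (CReset C) = CReset (subc \<sigma> C)"

lemma sub_plug: "sub \<sigma> (plug C t) = plug (subc \<sigma> C) (sub \<sigma> t)"
  by (induct C) auto

lemma fvc_subc: "fvc (subc \<sigma> C) = (\<Union>w\<in>fvc C. fv (\<sigma> w))"
  by (induct C) (auto simp: fv_sub)

lemma subc_cong: "(\<And>w. w \<in> fvc C \<Longrightarrow> \<sigma> w = \<tau> w) \<Longrightarrow> subc \<sigma> C = subc \<tau> C"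
  by (induct C) (auto intro: sub_cong)

lemma fv_plug: "fv (plug C t) = fvc C \<union> fv t"
  by (induct C) auto

lemma plug_ccomp: "plug (ccomp A B) t = plug A (plug B t)"
  by (induct A) auto

lemma ccomp_assoc: "ccomp (ccomp A B) C = ccomp A (ccomp B C)"
  by (induct A) auto

lemma ccomp_Hole [simp]: "ccomp A Hole = A"
  by (induct A) auto

lemma ccomp_CReset_neq_Hole [simp]: "ccomp A (CReset B) \<noteq> Hole" "Hole \<noteq> ccomp A (CReset B)"
  by (cases A; simp)+

lemma fvc_ccomp: "fvc (ccomp A B) = fvc A \<union> fvc B"
  by (induct A) auto

lemma is_ectx_ccomp [simp]: "is_ectx (ccomp A B) \<longleftrightarrow> is_ectx A \<and> is_ectx B"
  by (induct A) auto

lemma not_is_pctx_ccomp_CReset [simp]: "\<not> is_pctx (ccomp A (CReset B))"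
  by (induct A) auto

lemma is_pctx_imp_is_ectx: "is_pctx F \<Longrightarrow> is_ectx F"
  by (induct F) auto

lemma plug_eq_Var: "plug C a = Var x \<Longrightarrow> C = Hole \<and> a = Var x"
  by (cases C) auto

lemma is_val_plug: "is_val (plug C a) \<Longrightarrow> C = Hole \<and> is_val a"
  by (cases C) auto

lemma is_ectx_split:
  "is_ectx E \<Longrightarrow> is_pctx E \<or> (\<exists>E' F. is_ectx E' \<and> is_pctx F \<and> E = ccomp E' (CReset F))"
proof (induct E)
  case (CAppR v C)
  then show ?case by (metis ccomp.simps(2) is_ectx.simps(2) is_pctx.simps(2))
next
  case (CAppL C u)
  then show ?case by (metis ccomp.simps(3) is_ectx.simps(3) is_pctx.simps(3))
next
  case (CReset C)
  then show ?case by (metis ccomp.simps(1,4) is_ectx.simps(1,4))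
qed simp

section \<open>Shape of reductions and normal forms\<close>

lemma plug_eq_plug_prefix:
  assumes "plug E1 a1 = plug E2 a2" "is_ectx E1" "is_ectx E2" "\<not> is_val a1" "\<not> is_val a2"
  shows "(\<exists>C. E2 = ccomp E1 C \<and> a1 = plug C a2) \<or> (\<exists>C. E1 = ccomp E2 C \<and> a2 = plug C a1)"
  using assms
proof (induct E1 arbitrary: E2)
  case (CAppR v C1)
  then show ?case by (cases E2) (auto dest: is_val_plug)
next
  case (CAppL C1 u)
  then show ?case by (cases E2) (auto dest: is_val_plug)
next
  case (CReset C1)
  then show ?case by (cases E2) auto
qed auto

definition atomic :: "trm \<Rightarrow> bool" where
  "atomic a \<longleftrightarrow> \<not> is_val a \<and> (\<forall>C b. is_ectx C \<longrightarrow> \<not> is_val b \<longrightarrow> a = plug C b \<longrightarrow> C = Hole)"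

lemma atomic_plug_eq:
  assumes "atomic a1" "atomic a2" "is_ectx E1" "is_ectx E2" "plug E1 a1 = plug E2 a2"
  shows "E1 = E2 \<and> a1 = a2"
proof -
  have "\<not> is_val a1" "\<not> is_val a2"
    using assms(1,2) unfolding atomic_def by auto
  with plug_eq_plug_prefix[OF assms(5,3,4)] assms(1-4) show ?thesis
    unfolding atomic_def by fastforce
qed

lemma atomic_App: "is_val f \<Longrightarrow> is_val v \<Longrightarrow> atomic (App f v)"
  unfolding atomic_def
proof (intro conjI allI impI)
  fix C b assume "is_val f" "is_val v" "\<not> is_val b" "App f v = plug C b"
  then show "C = Hole" by (cases C) (auto dest: is_val_plug)
qed simp

lemma atomic_Reset: "is_val v \<Longrightarrow> atomic (Reset v)"
  unfolding atomic_def
proof (intro conjI allI impI)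
  fix C b assume "is_val v" "\<not> is_val b" "Reset v = plug C b"
  then show "C = Hole" by (cases C) (auto dest: is_val_plug)
qed simp

lemma atomic_Shift: "atomic (Shift k t)"
  unfolding atomic_def
proof (intro conjI allI impI)
  fix C b assume "Shift k t = plug C b"
  then show "C = Hole" by (cases C) auto
qed simp

lemma not_is_val_plug_atomic: "atomic a \<Longrightarrow> \<not> is_val (plug E a)"
  using is_val_plug unfolding atomic_def by blast

lemma step_redex_cases:
  assumes "step u w"
  obtains (beta) E x t v where "is_ectx E" "is_val v" "u = plug E (App (Lam x t) v)" "w = plug E (subst v x t)"
  | (reset) E v where "is_ectx E" "is_val v" "u = plug E (Reset v)" "w = plug E v"
  | (shift) E F k t where "is_ectx E" "is_pctx F" "u = plug (ccomp E (CReset F)) (Shift k t)"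
  using assms by (cases rule: step.cases) (auto simp: plug_ccomp)

lemma irreducible_plug_atomic:
  assumes E: "is_ectx E" and a: "atomic a" and "\<And>x t v. a \<noteq> App (Lam x t) v"
    and "\<And>v. a \<noteq> Reset v" and "\<And>k t. a \<noteq> Shift k t"
  shows "irreducible (plug E a)"
  unfolding irreducible_def
proof
  assume "\<exists>w. step (plug E a) w"
  then obtain w where "step (plug E a) w" by blast
  then show False
  proof (cases rule: step_redex_cases)
    case (beta E' x t v)
    then show False using atomic_plug_eq[OF a atomic_App E beta(1,3)] assms by simp
  next
    case (reset E' v)
    then show False using atomic_plug_eq[OF a atomic_Reset E reset(1,3)] assms by simp
  next
    case (shift E' F k t)
    then show False
      using atomic_plug_eq[OF a atomic_Shift E _ shift(3)] assms by (simp add: is_pctx_imp_is_ectx)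
  qed
qed

lemma irreducible_open: "is_ectx E \<Longrightarrow> is_val v \<Longrightarrow> irreducible (plug E (App (Var x) v))"
  by (rule irreducible_plug_atomic) (simp_all add: atomic_App)

lemma irreducible_ctrl:
  assumes F: "is_pctx F" shows "irreducible (plug F (Shift k t))"
  unfolding irreducible_def
proof
  have FE: "is_ectx F" using F by (rule is_pctx_imp_is_ectx)
  assume "\<exists>w. step (plug F (Shift k t)) w"
  then obtain w where "step (plug F (Shift k t)) w" by blast
  then show False
  proof (cases rule: step_redex_cases)
    case (beta E' x t' v)
    then show False using atomic_plug_eq[OF atomic_Shift atomic_App FE beta(1,3)] by simp
  next
    case (reset E' v)
    then show False using atomic_plug_eq[OF atomic_Shift atomic_Reset FE reset(1,3)] by simp
  next
    case (shift E' F' k' t')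
    then show False
      using atomic_plug_eq[OF atomic_Shift atomic_Shift FE _ shift(3)] F by (simp add: is_pctx_imp_is_ectx)
  qed
qed

lemma irreducible_val: "is_val v \<Longrightarrow> irreducible v"
  unfolding irreducible_def
proof
  assume v: "is_val v" and "\<exists>w. step v w"
  then obtain w where "step v w" by blast
  then show False
    by (cases rule: step_redex_cases)
      (use v not_is_val_plug_atomic atomic_App atomic_Reset atomic_Shift in \<open>metis is_val.simps(2)\<close>)+
qed

lemma step_reset_unique:
  assumes E: "is_ectx E" and v: "is_val v" and "step (plug E (Reset v)) w"
  shows "w = plug E v"
  using assms(3)
proof (cases rule: step_redex_cases)
  case (beta E' x t u)
  then show ?thesis using atomic_plug_eq[OF atomic_Reset[OF v] atomic_App E beta(1,3)] by simp
next
  case (reset E' u)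
  then show ?thesis using atomic_plug_eq[OF atomic_Reset[OF v] atomic_Reset E reset(1,3)] by simp
next
  case (shift E' F k t)
  then show ?thesis
    using atomic_plug_eq[OF atomic_Reset[OF v] atomic_Shift E _ shift(3)] by (simp add: is_pctx_imp_is_ectx)
qed

lemma step_plug: "step a b \<Longrightarrow> is_ectx C \<Longrightarrow> step (plug C a) (plug C b)"
proof (induct rule: step.induct)
  case (beta E v x t)
  then show ?case using step.beta[of "ccomp C E" v x t] by (simp add: plug_ccomp)
next
  case (shift E F x k t)
  then show ?case using step.shift[of "ccomp C E" F x k t] by (simp add: plug_ccomp)
next
  case (reset E v)
  then show ?case using step.reset[of "ccomp C E" v] by (simp add: plug_ccomp)
qed

lemma step_beta_Hole: "is_val v \<Longrightarrow> step (App (Lam x t) v) (subst v x t)"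
  using step.beta[of Hole v x t] by simp

lemma step_reset_Hole: "is_val v \<Longrightarrow> step (Reset v) v"
  using step.reset[of Hole v] by simp

lemma progress:
  "(\<exists>w. step u w) \<or> is_val u \<or> (\<exists>F k t. is_pctx F \<and> u = plug F (Shift k t)) \<or>
   (\<exists>E x v. is_ectx E \<and> is_val v \<and> u = plug E (App (Var x) v))"
proof (induct u)
  case (Shift k t)
  then show ?case by (metis is_pctx.simps(1) plug.simps(1))
next
  case (App a b)
  show ?case
  proof (cases "is_val a")
    case va: True
    from App(2) show ?thesis
    proof (elim disjE exE conjE)
      fix w assume "step b w"
      then show ?thesis using step_plug[of b w "CAppR a Hole"] va by auto
    next
      assume vb: "is_val b"
      show ?thesis
      proof (cases a)
        case (Var x)
        then show ?thesis using vb by (metis is_ectx.simps(1) plug.simps(1))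
      next
        case (Lam x t)
        then show ?thesis using vb step_beta_Hole by blast
      qed (use va in auto)
    next
      fix F k t assume "is_pctx F" "b = plug F (Shift k t)"
      then show ?thesis using va by (metis is_pctx.simps(2) plug.simps(2))
    next
      fix E x v assume "is_ectx E" "is_val v" "b = plug E (App (Var x) v)"
      then show ?thesis using va by (metis is_ectx.simps(2) plug.simps(2))
    qed
  next
    case na: False
    from App(1) show ?thesis
    proof (elim disjE exE conjE)
      fix w assume "step a w"
      then show ?thesis using step_plug[of a w "CAppL Hole b"] by auto
    next
      fix F k t assume "is_pctx F" "a = plug F (Shift k t)"
      then show ?thesis by (metis is_pctx.simps(3) plug.simps(3))
    next
      fix E x v assume "is_ectx E" "is_val v" "a = plug E (App (Var x) v)"
      then show ?thesis by (metis is_ectx.simps(3) plug.simps(3))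
    qed (use na in simp)
  qed
next
  case (Reset a)
  then show ?case
  proof (elim disjE exE conjE)
    fix w assume "step a w"
    then show ?thesis using step_plug[of a w "CReset Hole"] by auto
  next
    assume "is_val a"
    then show ?thesis using step_reset_Hole by blast
  next
    fix F k t assume "is_pctx F" "a = plug F (Shift k t)"
    then show ?thesis
      using step.shift[of Hole F "fresh (fvc F)" k t] fresh_notin[of "fvc F"] by auto
  next
    fix E x v assume "is_ectx E" "is_val v" "a = plug E (App (Var x) v)"
    then show ?thesis by (metis is_ectx.simps(4) plug.simps(4))
  qed
qed simp_all

lemma eval_irreducible: "irreducible u \<Longrightarrow> eval u n \<longleftrightarrow> n = u"
  unfolding eval_def irreducible_def by (metis converse_rtranclpE rtranclp.rtrancl_refl)

lemma eval_step: "step a b \<Longrightarrow> eval b n \<Longrightarrow> eval a n"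
  unfolding eval_def by (meson converse_rtranclp_into_rtranclp)

lemma eval_step_deterministic:
  assumes "eval a n" "step a b" "\<And>w. step a w \<Longrightarrow> w = b"
  shows "eval b n"
  using assms unfolding eval_def irreducible_def by (metis converse_rtranclpE)

section \<open>Eta-expanding the continuation variable\<close>

definition cont_eta :: "nat \<Rightarrow> nat \<Rightarrow> trm" where
  "cont_eta K y = Lam y (Reset (App (Var K) (Var y)))"

lemma fv_cont_eta [simp]: "y \<noteq> K \<Longrightarrow> fv (cont_eta K y) = {K}"
  by (auto simp: cont_eta_def)

lemma is_val_cont_eta [simp]: "is_val (cont_eta K y)"
  by (simp add: cont_eta_def)

lemma cont_eta_neq [simp]:
  "App a b \<noteq> cont_eta K y" "Reset a \<noteq> cont_eta K y" "Shift k t \<noteq> cont_eta K y" "Var x \<noteq> cont_eta K y"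
  by (simp_all add: cont_eta_def)

lemma sub_cont_eta:
  assumes "\<sigma> K = Var K" "y \<noteq> K"
  obtains y' where "y' \<noteq> K" "sub \<sigma> (cont_eta K y) = cont_eta K y'"
proof
  have "(\<Union>w\<in>fv (Reset (App (Var K) (Var y))) - {y}. fv (\<sigma> w)) = {K}"
    using assms by auto
  then show "sub \<sigma> (cont_eta K y) = cont_eta K (fresh {K})"
    using assms by (simp add: cont_eta_def Let_def)
  show "fresh {K} \<noteq> K" using fresh_notin[of "{K}"] by simp
qed

text \<open>\<open>eta_rel K t0 t1\<close>: \<open>t1\<close> arises from \<open>t0\<close> by replacing some subterms \<open>\<langle>K m\<rangle>\<close> by
  \<open>\<langle>(\<lambda>y. \<langle>K y\<rangle>) m\<rangle>\<close>, with \<open>K\<close> occurring nowhere else.\<close>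

inductive eta_rel :: "nat \<Rightarrow> trm \<Rightarrow> trm \<Rightarrow> bool" for K where
  eta_Var: "w \<noteq> K \<Longrightarrow> eta_rel K (Var w) (Var w)"
| eta_App: "eta_rel K a0 a1 \<Longrightarrow> eta_rel K b0 b1 \<Longrightarrow> eta_rel K (App a0 b0) (App a1 b1)"
| eta_Reset: "eta_rel K a0 a1 \<Longrightarrow> eta_rel K (Reset a0) (Reset a1)"
| eta_Binder: "is_binder B \<Longrightarrow> z \<noteq> K \<Longrightarrow> z \<notin> fv (B x0 t0) \<Longrightarrow> z \<notin> fv (B x1 t1) \<Longrightarrow>
    eta_rel K (sub (Var(x0 := Var z)) t0) (sub (Var(x1 := Var z)) t1) \<Longrightarrow> eta_rel K (B x0 t0) (B x1 t1)"
| eta_cont: "y \<noteq> K \<Longrightarrow> eta_rel K m0 m1 \<Longrightarrow>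
    eta_rel K (Reset (App (Var K) m0)) (Reset (App (cont_eta K y) m1))"

lemma eta_rel_fv: "eta_rel K t0 t1 \<Longrightarrow> fv t1 = fv t0"
proof (induct rule: eta_rel.induct)
  case (eta_Binder B z x0 t0 x1 t1)
  then show ?case using fv_rename_bound[of z t0 x0] fv_rename_bound[of z t1 x1] by auto
qed auto

lemma eta_rel_is_val: "eta_rel K t0 t1 \<Longrightarrow> is_val t1 = is_val t0"
  by (induct rule: eta_rel.induct) (auto simp: is_binder_def)

lemma eta_rel_refl: "K \<notin> fv t \<Longrightarrow> eta_rel K t t"
proof (induct "size t" arbitrary: t rule: less_induct)
  case less
  have binder_case: "eta_rel K t t" if B: "is_binder B" and t: "t = B y b" for B y b
  proof -
    define z where "z = fresh (fv t \<union> {K})"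
    have z: "z \<notin> fv t \<union> {K}" unfolding z_def by (rule fresh_notin) simp
    have "size (sub (Var(y := Var z)) b) < size t"
      using size_rename[of "Var(y := Var z)" b] B t by simp
    moreover have "K \<notin> fv (sub (Var(y := Var z)) b)"
      using less.prems B t z by (auto simp: fv_sub)
    ultimately have "eta_rel K (sub (Var(y := Var z)) b) (sub (Var(y := Var z)) b)"
      using less.hyps by blast
    then show ?thesis using B t z by (auto intro: eta_Binder)
  qed
  show ?case
    by (cases t) (use less binder_case in \<open>auto intro: eta_rel.intros\<close>)
qed

definition rel_subst :: "nat \<Rightarrow> (trm \<Rightarrow> trm \<Rightarrow> bool) \<Rightarrow> nat set \<Rightarrow> (nat \<Rightarrow> trm) \<Rightarrow> (nat \<Rightarrow> trm) \<Rightarrow> bool"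
  where "rel_subst K Q S \<sigma>0 \<sigma>1 \<longleftrightarrow>
    (\<forall>w\<in>S. if w = K then \<sigma>0 w = Var K \<and> \<sigma>1 w = Var K else Q (\<sigma>0 w) (\<sigma>1 w))"

lemma rel_subst_mono: "rel_subst K Q S \<sigma>0 \<sigma>1 \<Longrightarrow> S' \<subseteq> S \<Longrightarrow> rel_subst K Q S' \<sigma>0 \<sigma>1"
  unfolding rel_subst_def by blast

lemma sub_rename_bound:
  assumes "z0 \<notin> (\<Union>w\<in>fv t - {x}. fv (\<sigma> w))" "z \<notin> fv t - {x}"
  shows "sub (Var(z0 := Var z')) (sub (\<sigma>(x := Var z0)) t)
       = sub (\<lambda>w. if w = z then Var z' else sub Var (\<sigma> w)) (sub (Var(x := Var z)) t)"
  unfolding sub_comp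
proof (rule sub_cong)
  fix w assume "w \<in> fv t"
  with assms show "sub (Var(z0 := Var z')) ((\<sigma>(x := Var z0)) w) =
      sub (\<lambda>w. if w = z then Var z' else sub Var (\<sigma> w)) ((Var(x := Var z)) w)"
    by (cases "w = x") (auto intro!: sub_cong)
qed

lemma sub_binder_rename:
  assumes B: "is_binder B" and z: "z \<notin> fv (B x t)"
  obtains x' t' where "sub \<sigma> (B x t) = B x' t'"
    and "\<And>z'. sub (Var(x' := Var z')) t' = sub (\<lambda>w. if w = z then Var z' else sub Var (\<sigma> w)) (sub (Var(x := Var z)) t)"
proof
  show "sub \<sigma> (B x t) = B (fresh (\<Union>w\<in>fv t - {x}. fv (\<sigma> w))) (sub (\<sigma>(x := Var (fresh (\<Union>w\<in>fv t - {x}. fv (\<sigma> w))))) t)"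
    using B by (simp add: sub_binder Let_def)
  show "sub (Var(fresh (\<Union>w\<in>fv t - {x}. fv (\<sigma> w)) := Var z')) (sub (\<sigma>(x := Var (fresh (\<Union>w\<in>fv t - {x}. fv (\<sigma> w))))) t)
      = sub (\<lambda>w. if w = z then Var z' else sub Var (\<sigma> w)) (sub (Var(x := Var z)) t)" for z'
    by (rule sub_rename_bound[OF fresh_bound]) (use B z in simp)
qed

lemma rel_subst_rename_bound:
  assumes "rel_subst K Q (fv (B x t)) \<sigma>0 \<sigma>1" "is_binder B" "z \<notin> fv (B x t)" "z \<noteq> K" "z' \<noteq> K"
    and "\<And>u. u \<noteq> K \<Longrightarrow> Q (Var u) (Var u)" "\<And>a b. Q a b \<Longrightarrow> Q (sub Var a) (sub Var b)"
  shows "rel_subst K Q (fv (sub (Var(x := Var z)) t))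
           (\<lambda>w. if w = z then Var z' else sub Var (\<sigma>0 w)) (\<lambda>w. if w = z then Var z' else sub Var (\<sigma>1 w))"
  unfolding rel_subst_def
proof
  fix w assume w: "w \<in> fv (sub (Var(x := Var z)) t)"
  show "if w = K then (if w = z then Var z' else sub Var (\<sigma>0 w)) = Var K \<and> (if w = z then Var z' else sub Var (\<sigma>1 w)) = Var K
        else Q (if w = z then Var z' else sub Var (\<sigma>0 w)) (if w = z then Var z' else sub Var (\<sigma>1 w))"
  proof (cases "w = z")
    case False
    then have "w \<in> fv (B x t)"
      using w assms(2) by (auto simp: fv_sub split: if_split_asm)
    then show ?thesis
      using assms(1,7) False unfolding rel_subst_def by (auto split: if_splits)
  qed (use assms(4-6) in simp)
qed

text \<open>Closure of \<open>Q\<close> under \<open>sub Var\<close> is needed because going under a binder renames the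
  bound variable, which applies \<open>sub Var\<close> to the substituted terms.\<close>

lemma eta_rel_sub_closed:
  assumes "eta_rel K t0 t1" "rel_subst K Q (fv t0) \<sigma>0 \<sigma>1"
    and Q_rel: "\<And>a b. Q a b \<Longrightarrow> eta_rel K a b"
    and Q_Var: "\<And>u. u \<noteq> K \<Longrightarrow> Q (Var u) (Var u)"
    and Q_sub_Var: "\<And>a b. Q a b \<Longrightarrow> Q (sub Var a) (sub Var b)"
  shows "eta_rel K (sub \<sigma>0 t0) (sub \<sigma>1 t1)"
  using assms(1,2)
proof (induct arbitrary: \<sigma>0 \<sigma>1 rule: eta_rel.induct)
  case (eta_Var w)
  then show ?case using Q_rel by (simp add: rel_subst_def)
next
  case (eta_App a0 a1 b0 b1)
  have "rel_subst K Q (fv a0) \<sigma>0 \<sigma>1" "rel_subst K Q (fv b0) \<sigma>0 \<sigma>1"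
    using rel_subst_mono[OF eta_App.prems] by simp_all
  with eta_App.hyps show ?case by (simp add: eta_rel.eta_App)
next
  case (eta_Reset a0 a1)
  then show ?case by (auto intro!: eta_rel.eta_Reset)
next
  case (eta_cont y m0 m1)
  then have K: "\<sigma>0 K = Var K" "\<sigma>1 K = Var K"
    by (simp_all add: rel_subst_def)
  obtain y' where "y' \<noteq> K" "sub \<sigma>1 (cont_eta K y) = cont_eta K y'"
    using sub_cont_eta[of \<sigma>1 K y] K(2) eta_cont.hyps(1) by blast
  moreover have "rel_subst K Q (fv m0) \<sigma>0 \<sigma>1"
    using rel_subst_mono[OF eta_cont.prems] by auto
  ultimately show ?case using eta_cont.hyps K by (simp add: eta_rel.eta_cont)
next
  case (eta_Binder B z x0 t0 x1 t1)
  obtain x0' t0' where s0: "sub \<sigma>0 (B x0 t0) = B x0' t0'"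
    and e0: "\<And>z'. sub (Var(x0' := Var z')) t0' = sub (\<lambda>w. if w = z then Var z' else sub Var (\<sigma>0 w)) (sub (Var(x0 := Var z)) t0)"
    using sub_binder_rename[OF eta_Binder.hyps(1,3)] by blast
  obtain x1' t1' where s1: "sub \<sigma>1 (B x1 t1) = B x1' t1'"
    and e1: "\<And>z'. sub (Var(x1' := Var z')) t1' = sub (\<lambda>w. if w = z then Var z' else sub Var (\<sigma>1 w)) (sub (Var(x1 := Var z)) t1)"
    using sub_binder_rename[OF eta_Binder.hyps(1,4)] by blast
  define z' where "z' = fresh (fv (B x0' t0') \<union> fv (B x1' t1') \<union> {K})"
  have z': "z' \<notin> fv (B x0' t0') \<union> fv (B x1' t1') \<union> {K}"
    unfolding z'_def by (rule fresh_notin) simp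
  have "rel_subst K Q (fv (sub (Var(x0 := Var z)) t0))
          (\<lambda>w. if w = z then Var z' else sub Var (\<sigma>0 w)) (\<lambda>w. if w = z then Var z' else sub Var (\<sigma>1 w))"
    using eta_Binder.prems eta_Binder.hyps(1-3) z' Q_Var Q_sub_Var by (intro rel_subst_rename_bound) auto
  then have "eta_rel K (sub (Var(x0' := Var z')) t0') (sub (Var(x1' := Var z')) t1')"
    unfolding e0 e1 by (rule eta_Binder.hyps(6))
  then show ?case
    unfolding s0 s1 by (rule eta_rel.eta_Binder[OF eta_Binder.hyps(1), rotated 3]) (use z' in auto)
qed

lemma eta_rel_rename:
  assumes "eta_rel K t0 t1" and "\<And>w. w \<in> fv t0 \<Longrightarrow> \<exists>u. \<sigma> w = Var u \<and> (u = K \<longleftrightarrow> w = K)"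
  shows "eta_rel K (sub \<sigma> t0) (sub \<sigma> t1)"
  by (rule eta_rel_sub_closed[where Q = "\<lambda>a b. \<exists>u. u \<noteq> K \<and> a = Var u \<and> b = Var u"])
    (use assms in \<open>auto simp: rel_subst_def intro: eta_Var\<close>)

lemma eta_rel_sub:
  "eta_rel K t0 t1 \<Longrightarrow> rel_subst K (eta_rel K) (fv t0) \<sigma>0 \<sigma>1 \<Longrightarrow> eta_rel K (sub \<sigma>0 t0) (sub \<sigma>1 t1)"
  by (rule eta_rel_sub_closed[where Q = "eta_rel K"]) (auto intro: eta_Var eta_rel_rename)

lemma plug_eq_binder: "is_binder B \<Longrightarrow> plug C a = B x t \<Longrightarrow> C = Hole"
  by (cases C) (auto simp: is_binder_def)

lemma eta_rel_Var_inv: "eta_rel K (Var x) u \<Longrightarrow> u = Var x \<and> x \<noteq> K"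
  by (cases rule: eta_rel.cases) (auto simp: is_binder_def)

lemma eta_rel_binder_inv:
  assumes "is_binder B" "eta_rel K (B x t) u"
  obtains x1 t1 where "u = B x1 t1"
  using assms(2) by cases (use assms(1) in \<open>auto simp: is_binder_def\<close>)

lemma eta_rel_binder_inv2:
  assumes "is_binder B" "eta_rel K u (B x t)"
  obtains x0 t0 where "u = B x0 t0"
  using assms(2) by cases (use assms(1) in \<open>auto simp: is_binder_def cont_eta_def\<close>)

lemma eta_rel_subst_binder:
  assumes B: "is_binder B" and "eta_rel K (B x0 t0) (B x1 t1)" and v: "eta_rel K v0 v1"
  shows "eta_rel K (subst v0 x0 t0) (subst v1 x1 t1)"
proof -
  from assms(2) obtain z where z: "z \<noteq> K" "z \<notin> fv t0 - {x0}" "z \<notin> fv t1 - {x1}"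
    and body: "eta_rel K (sub (Var(x0 := Var z)) t0) (sub (Var(x1 := Var z)) t1)"
    by cases (use B in \<open>auto simp: is_binder_def\<close>)
  have "eta_rel K (sub (Var(z := v0)) (sub (Var(x0 := Var z)) t0)) (sub (Var(z := v1)) (sub (Var(x1 := Var z)) t1))"
    by (rule eta_rel_sub[OF body]) (use z v in \<open>auto simp: rel_subst_def intro: eta_Var\<close>)
  moreover have "sub (Var(z := v0)) (sub (Var(x0 := Var z)) t0) = subst v0 x0 t0"
    and "sub (Var(z := v1)) (sub (Var(x1 := Var z)) t1) = subst v1 x1 t1"
    unfolding subst_def sub_comp by (rule sub_cong, use z in auto)+
  ultimately show ?thesis by simp
qed

inductive eta_ctx :: "nat \<Rightarrow> ctx \<Rightarrow> ctx \<Rightarrow> bool" for K where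
  etac_Hole: "eta_ctx K Hole Hole"
| etac_AppR: "eta_rel K v0 v1 \<Longrightarrow> eta_ctx K C0 C1 \<Longrightarrow> eta_ctx K (CAppR v0 C0) (CAppR v1 C1)"
| etac_AppL: "eta_ctx K C0 C1 \<Longrightarrow> eta_rel K u0 u1 \<Longrightarrow> eta_ctx K (CAppL C0 u0) (CAppL C1 u1)"
| etac_Reset: "eta_ctx K C0 C1 \<Longrightarrow> eta_ctx K (CReset C0) (CReset C1)"
| etac_cont: "y \<noteq> K \<Longrightarrow> eta_ctx K C0 C1 \<Longrightarrow>
    eta_ctx K (CReset (CAppR (Var K) C0)) (CReset (CAppR (cont_eta K y) C1))"

lemma eta_ctx_plug: "eta_ctx K C0 C1 \<Longrightarrow> eta_rel K a0 a1 \<Longrightarrow> eta_rel K (plug C0 a0) (plug C1 a1)"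
  by (induct rule: eta_ctx.induct) (auto intro: eta_rel.intros)

lemma eta_ctx_fvc: "eta_ctx K C0 C1 \<Longrightarrow> fvc C1 = fvc C0"
  by (induct rule: eta_ctx.induct) (auto dest: eta_rel_fv)

lemma eta_ctx_is_ectx: "eta_ctx K C0 C1 \<Longrightarrow> is_ectx C1 = is_ectx C0"
  by (induct rule: eta_ctx.induct) (auto dest: eta_rel_is_val)

lemma eta_ctx_is_pctx: "eta_ctx K C0 C1 \<Longrightarrow> is_pctx C1 = is_pctx C0"
  by (induct rule: eta_ctx.induct) (auto dest: eta_rel_is_val)

lemma eta_ctx_CReset_is_pctx: "eta_ctx K (CReset F0) (CReset F1) \<Longrightarrow> is_pctx F1 = is_pctx F0"
  by (cases rule: eta_ctx.cases) (auto dest: eta_ctx_is_pctx)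

lemma eta_ctx_ccomp: "eta_ctx K A0 A1 \<Longrightarrow> eta_ctx K B0 B1 \<Longrightarrow> eta_ctx K (ccomp A0 B0) (ccomp A1 B1)"
  by (induct rule: eta_ctx.induct) (auto intro: eta_ctx.intros)

section \<open>Decomposition of related terms\<close>

definition eta_decomp :: "nat \<Rightarrow> ctx \<Rightarrow> trm \<Rightarrow> trm \<Rightarrow> bool" where
  "eta_decomp K E0 r0 u1 \<longleftrightarrow>
     (\<exists>E1 r1. u1 = plug E1 r1 \<and> eta_ctx K E0 E1 \<and> eta_rel K r0 r1) \<or>
     (\<exists>m E0' E1 y m1. r0 = App (Var K) m \<and> E0 = ccomp E0' (CReset Hole) \<and>
        u1 = plug E1 (Reset (App (cont_eta K y) m1)) \<and> y \<noteq> K \<and> eta_ctx K E0' E1 \<and> eta_rel K m m1)"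

definition eta_decomp_inv :: "nat \<Rightarrow> trm \<Rightarrow> ctx \<Rightarrow> trm \<Rightarrow> bool" where
  "eta_decomp_inv K u0 E1 r1 \<longleftrightarrow>
     (\<exists>E0 r0. u0 = plug E0 r0 \<and> eta_ctx K E0 E1 \<and> eta_rel K r0 r1) \<or>
     (\<exists>E0 E1' y m0 m1. E1 = ccomp E1' (CReset Hole) \<and> r1 = App (cont_eta K y) m1 \<and> y \<noteq> K \<and>
        u0 = plug E0 (Reset (App (Var K) m0)) \<and> eta_ctx K E0 E1' \<and> eta_rel K m0 m1)"

lemma eta_decomp_Hole: "eta_rel K u0 u1 \<Longrightarrow> eta_decomp K Hole u0 u1"
  unfolding eta_decomp_def by (metis etac_Hole plug.simps(1))

lemma eta_decomp_inv_Hole: "eta_rel K u0 u1 \<Longrightarrow> eta_decomp_inv K u0 Hole u1"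
  unfolding eta_decomp_inv_def by (metis etac_Hole plug.simps(1))

lemma eta_decomp_ccomp:
  "eta_decomp K C r0 m1 \<Longrightarrow> eta_ctx K D0 D1 \<Longrightarrow> eta_decomp K (ccomp D0 C) r0 (plug D1 m1)"
  unfolding eta_decomp_def
  by (elim disjE exE conjE; simp only: plug_ccomp[symmetric] ccomp_assoc[symmetric])
    (blast intro: eta_ctx_ccomp)+

lemma eta_decomp_inv_ccomp:
  "eta_decomp_inv K m0 C r1 \<Longrightarrow> eta_ctx K D0 D1 \<Longrightarrow> eta_decomp_inv K (plug D0 m0) (ccomp D1 C) r1"
  unfolding eta_decomp_inv_def
  by (elim disjE exE conjE; simp only: plug_ccomp[symmetric] ccomp_assoc[symmetric])
    (blast intro: eta_ctx_ccomp)+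

lemma eta_rel_decomp:
  "eta_rel K u0 u1 \<Longrightarrow> u0 = plug E0 r0 \<Longrightarrow> r0 \<noteq> Var K \<Longrightarrow> eta_decomp K E0 r0 u1"
proof (induct arbitrary: E0 rule: eta_rel.induct)
  case (eta_Var w)
  then show ?case using eta_decomp_Hole eta_rel.eta_Var plug_eq_Var by metis
next
  case (eta_Binder B z x0 t0 x1 t1)
  then have "E0 = Hole" using plug_eq_binder by metis
  then show ?case
    using eta_Binder.prems(1) eta_decomp_Hole eta_rel.eta_Binder[OF eta_Binder.hyps(1-5)] by simp
next
  case (eta_App a0 a1 b0 b1)
  show ?case
  proof (cases E0)
    case Hole
    then show ?thesis using eta_App.prems(1) eta_decomp_Hole eta_rel.eta_App[OF eta_App.hyps(1,3)] by simp
  next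
    case (CAppR v C)
    then show ?thesis
      using eta_App eta_decomp_ccomp[of K C r0 b1 "CAppR a0 Hole" "CAppR a1 Hole"]
      by (simp add: etac_AppR etac_Hole)
  next
    case (CAppL C u)
    then show ?thesis
      using eta_App eta_decomp_ccomp[of K C r0 a1 "CAppL Hole b0" "CAppL Hole b1"]
      by (simp add: etac_AppL etac_Hole)
  qed (use eta_App in simp)
next
  case (eta_Reset a0 a1)
  show ?case
  proof (cases E0)
    case Hole
    then show ?thesis using eta_Reset.prems(1) eta_decomp_Hole eta_rel.eta_Reset[OF eta_Reset.hyps(1)] by simp
  next
    case (CReset C)
    then show ?thesis
      using eta_Reset eta_decomp_ccomp[of K C r0 a1 "CReset Hole" "CReset Hole"]
      by (simp add: etac_Reset etac_Hole)
  qed (use eta_Reset in simp_all)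
next
  case (eta_cont y m0 m1)
  show ?case
  proof (cases E0)
    case Hole
    then show ?thesis using eta_cont.prems(1) eta_decomp_Hole eta_rel.eta_cont[OF eta_cont.hyps(1,2)] by simp
  next
    case (CReset C)
    with eta_cont.prems(1) have C: "plug C r0 = App (Var K) m0" by simp
    show ?thesis
    proof (cases C)
      case Hole
      then show ?thesis
        using CReset C eta_cont.hyps unfolding eta_decomp_def
        by (intro disjI2 exI[of _ m0] exI[of _ Hole] exI[of _ Hole] exI[of _ y] exI[of _ m1])
          (auto intro: etac_Hole)
    next
      case (CAppR v C')
      then show ?thesis
        using CReset C eta_cont eta_decomp_ccomp[of K C' r0 m1 "CReset (CAppR (Var K) Hole)"
            "CReset (CAppR (cont_eta K y) Hole)"]
        by (simp add: etac_cont etac_Hole)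
    next
      case (CAppL C' u)
      then show ?thesis using C eta_cont.prems(2) plug_eq_Var by auto
    qed (use C in simp)
  qed (use eta_cont in simp_all)
qed

lemma eta_rel_decomp_inv:
  "eta_rel K u0 u1 \<Longrightarrow> u1 = plug E1 r1 \<Longrightarrow> (\<And>y. r1 \<noteq> cont_eta K y) \<Longrightarrow> eta_decomp_inv K u0 E1 r1"
proof (induct arbitrary: E1 rule: eta_rel.induct)
  case (eta_Var w)
  then show ?case using eta_decomp_inv_Hole eta_rel.eta_Var plug_eq_Var by metis
next
  case (eta_Binder B z x0 t0 x1 t1)
  then have "E1 = Hole" using plug_eq_binder by metis
  then show ?case
    using eta_Binder.prems(1) eta_decomp_inv_Hole eta_rel.eta_Binder[OF eta_Binder.hyps(1-5)] by simp
next
  case (eta_App a0 a1 b0 b1)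
  show ?case
  proof (cases E1)
    case Hole
    then show ?thesis using eta_App.prems(1) eta_decomp_inv_Hole eta_rel.eta_App[OF eta_App.hyps(1,3)] by simp
  next
    case (CAppR v C)
    then show ?thesis
      using eta_App eta_decomp_inv_ccomp[of K b0 C r1 "CAppR a0 Hole" "CAppR a1 Hole"]
      by (simp add: etac_AppR etac_Hole)
  next
    case (CAppL C u)
    then show ?thesis
      using eta_App eta_decomp_inv_ccomp[of K a0 C r1 "CAppL Hole b0" "CAppL Hole b1"]
      by (simp add: etac_AppL etac_Hole)
  qed (use eta_App in simp)
next
  case (eta_Reset a0 a1)
  show ?case
  proof (cases E1)
    case Hole
    then show ?thesis using eta_Reset.prems(1) eta_decomp_inv_Hole eta_rel.eta_Reset[OF eta_Reset.hyps(1)] by simp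
  next
    case (CReset C)
    then show ?thesis
      using eta_Reset eta_decomp_inv_ccomp[of K a0 C r1 "CReset Hole" "CReset Hole"]
      by (simp add: etac_Reset etac_Hole)
  qed (use eta_Reset in simp_all)
next
  case (eta_cont y m0 m1)
  show ?case
  proof (cases E1)
    case Hole
    then show ?thesis using eta_cont.prems(1) eta_decomp_inv_Hole eta_rel.eta_cont[OF eta_cont.hyps(1,2)] by simp
  next
    case (CReset C)
    with eta_cont.prems(1) have C: "plug C r1 = App (cont_eta K y) m1" by simp
    show ?thesis
    proof (cases C)
      case Hole
      then show ?thesis
        using CReset C eta_cont.hyps unfolding eta_decomp_inv_def
        by (intro disjI2 exI[of _ Hole] exI[of _ Hole] exI[of _ y] exI[of _ m0] exI[of _ m1])
          (auto intro: etac_Hole)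
    next
      case (CAppR v C')
      then show ?thesis
        using CReset C eta_cont eta_decomp_inv_ccomp[of K m0 C' r1 "CReset (CAppR (Var K) Hole)"
            "CReset (CAppR (cont_eta K y) Hole)"]
        by (simp add: etac_cont etac_Hole)
    next
      case (CAppL C' u)
      then show ?thesis using C eta_cont.prems(2) by (cases C') auto
    qed (use C in simp)
  qed (use eta_cont in simp_all)
qed

lemma eta_ctx_split:
  "eta_ctx K X0 X1 \<Longrightarrow> X0 = ccomp E0 (CReset D0) \<Longrightarrow>
   \<exists>E1 D1. X1 = ccomp E1 (CReset D1) \<and> eta_ctx K E0 E1 \<and> eta_ctx K (CReset D0) (CReset D1)"
proof (induct arbitrary: E0 rule: eta_ctx.induct)
  case (etac_AppR v0 v1 C0 C1)
  then obtain E0' where E0: "E0 = CAppR v0 E0'" and "C0 = ccomp E0' (CReset D0)"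
    by (cases E0) auto
  then obtain E1 D1 where "C1 = ccomp E1 (CReset D1)" "eta_ctx K E0' E1" "eta_ctx K (CReset D0) (CReset D1)"
    using etac_AppR.hyps(3) by blast
  then show ?case using E0 etac_AppR.hyps(1) by (metis ccomp.simps(2) eta_ctx.etac_AppR)
next
  case (etac_AppL C0 C1 u0 u1)
  then obtain E0' where E0: "E0 = CAppL E0' u0" and "C0 = ccomp E0' (CReset D0)"
    by (cases E0) auto
  then obtain E1 D1 where "C1 = ccomp E1 (CReset D1)" "eta_ctx K E0' E1" "eta_ctx K (CReset D0) (CReset D1)"
    using etac_AppL.hyps(2) by blast
  then show ?case using E0 etac_AppL.hyps(3) by (metis ccomp.simps(3) eta_ctx.etac_AppL)
next
  case (etac_Reset C0 C1)
  show ?case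
  proof (cases E0)
    case Hole
    then show ?thesis
      using etac_Reset by (intro exI[of _ Hole] exI[of _ C1]) (auto intro: eta_ctx.intros)
  next
    case (CReset E0')
    then obtain E1 D1 where "C1 = ccomp E1 (CReset D1)" "eta_ctx K E0' E1" "eta_ctx K (CReset D0) (CReset D1)"
      using etac_Reset.hyps(2)[of E0'] etac_Reset.prems CReset by auto
    then show ?thesis using CReset by (metis ccomp.simps(4) eta_ctx.etac_Reset)
  qed (use etac_Reset in auto)
next
  case (etac_cont y C0 C1)
  show ?case
  proof (cases E0)
    case Hole
    then show ?thesis
      using etac_cont by (intro exI[of _ Hole] exI[of _ "CAppR (cont_eta K y) C1"]) (auto intro: eta_ctx.intros)
  next
    case (CReset E0')
    with etac_cont.prems obtain E0'' where E0': "E0' = CAppR (Var K) E0''" and "C0 = ccomp E0'' (CReset D0)"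
      by (cases E0') auto
    then obtain E1 D1 where "C1 = ccomp E1 (CReset D1)" "eta_ctx K E0'' E1" "eta_ctx K (CReset D0) (CReset D1)"
      using etac_cont.hyps(3) by blast
    then show ?thesis
      using CReset E0' etac_cont.hyps(1) by (metis ccomp.simps(2,4) eta_ctx.etac_cont)
  qed (use etac_cont in auto)
qed simp

lemma eta_ctx_split_inv:
  "eta_ctx K X0 X1 \<Longrightarrow> X1 = ccomp E1 (CReset D1) \<Longrightarrow>
   \<exists>E0 D0. X0 = ccomp E0 (CReset D0) \<and> eta_ctx K E0 E1 \<and> eta_ctx K (CReset D0) (CReset D1)"
proof (induct arbitrary: E1 rule: eta_ctx.induct)
  case (etac_AppR v0 v1 C0 C1)
  then obtain E1' where E1: "E1 = CAppR v1 E1'" and "C1 = ccomp E1' (CReset D1)"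
    by (cases E1) auto
  then obtain E0 D0 where "C0 = ccomp E0 (CReset D0)" "eta_ctx K E0 E1'" "eta_ctx K (CReset D0) (CReset D1)"
    using etac_AppR.hyps(3) by blast
  then show ?case using E1 etac_AppR.hyps(1) by (metis ccomp.simps(2) eta_ctx.etac_AppR)
next
  case (etac_AppL C0 C1 u0 u1)
  then obtain E1' where E1: "E1 = CAppL E1' u1" and "C1 = ccomp E1' (CReset D1)"
    by (cases E1) auto
  then obtain E0 D0 where "C0 = ccomp E0 (CReset D0)" "eta_ctx K E0 E1'" "eta_ctx K (CReset D0) (CReset D1)"
    using etac_AppL.hyps(2) by blast
  then show ?case using E1 etac_AppL.hyps(3) by (metis ccomp.simps(3) eta_ctx.etac_AppL)
next
  case (etac_Reset C0 C1)
  show ?case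
  proof (cases E1)
    case Hole
    then show ?thesis
      using etac_Reset by (intro exI[of _ Hole] exI[of _ C0]) (auto intro: eta_ctx.intros)
  next
    case (CReset E1')
    then obtain E0 D0 where "C0 = ccomp E0 (CReset D0)" "eta_ctx K E0 E1'" "eta_ctx K (CReset D0) (CReset D1)"
      using etac_Reset.hyps(2)[of E1'] etac_Reset.prems CReset by auto
    then show ?thesis using CReset by (metis ccomp.simps(4) eta_ctx.etac_Reset)
  qed (use etac_Reset in auto)
next
  case (etac_cont y C0 C1)
  show ?case
  proof (cases E1)
    case Hole
    then show ?thesis
      using etac_cont by (intro exI[of _ Hole] exI[of _ "CAppR (Var K) C0"]) (auto intro: eta_ctx.intros)
  next
    case (CReset E1')
    with etac_cont.prems obtain E1'' where E1': "E1' = CAppR (cont_eta K y) E1''" and "C1 = ccomp E1'' (CReset D1)"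
      by (cases E1') auto
    then obtain E0 D0 where "C0 = ccomp E0 (CReset D0)" "eta_ctx K E0 E1''" "eta_ctx K (CReset D0) (CReset D1)"
      using etac_cont.hyps(3) by blast
    then show ?thesis
      using CReset E1' etac_cont.hyps(1) by (metis ccomp.simps(2,4) eta_ctx.etac_cont)
  qed (use etac_cont in auto)
qed simp

section \<open>Reduction of related terms\<close>

lemma eta_rel_App_inv: "eta_rel K (App a b) u \<Longrightarrow> \<exists>a1 b1. u = App a1 b1 \<and> eta_rel K a a1 \<and> eta_rel K b b1"
  by (cases rule: eta_rel.cases) (auto simp: is_binder_def)

lemma eta_rel_App_inv2: "eta_rel K u (App a b) \<Longrightarrow> \<exists>a0 b0. u = App a0 b0 \<and> eta_rel K a0 a \<and> eta_rel K b0 b"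
  by (cases rule: eta_rel.cases) (auto simp: is_binder_def)

lemma eta_rel_Reset_val_inv: "eta_rel K (Reset v) u \<Longrightarrow> is_val v \<Longrightarrow> \<exists>v1. u = Reset v1 \<and> eta_rel K v v1"
  by (cases rule: eta_rel.cases) (auto simp: is_binder_def)

lemma eta_rel_Reset_val_inv2: "eta_rel K u (Reset v) \<Longrightarrow> is_val v \<Longrightarrow> \<exists>v0. u = Reset v0 \<and> eta_rel K v0 v"
  by (cases rule: eta_rel.cases) (auto simp: is_binder_def)

lemma eta_rel_Lam_plug:
  assumes c: "eta_ctx K C0 C1" and x0: "x0 \<notin> fvc C0" and x1: "x1 \<notin> fvc C1"
  shows "eta_rel K (Lam x0 (plug C0 (Var x0))) (Lam x1 (plug C1 (Var x1)))"
proof -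
  have fvc: "fvc C1 = fvc C0" using c by (rule eta_ctx_fvc)
  define z where "z = fresh (fvc C0 \<union> {K})"
  have z: "z \<notin> fvc C0 \<union> {K}" unfolding z_def by (rule fresh_notin) simp
  have "eta_rel K (plug C0 (Var z)) (plug C1 (Var z))"
    using c z by (auto intro: eta_ctx_plug eta_Var)
  then have "eta_rel K (sub Var (plug C0 (Var z))) (sub Var (plug C1 (Var z)))"
    by (rule eta_rel_rename) simp
  moreover have "subc Var C0 = subc (Var(x0 := Var z)) C0" "subc Var C1 = subc (Var(x1 := Var z)) C1"
    using x0 x1 by (auto intro: subc_cong)
  ultimately have "eta_rel K (sub (Var(x0 := Var z)) (plug C0 (Var x0))) (sub (Var(x1 := Var z)) (plug C1 (Var x1)))"
    by (simp add: sub_plug)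
  then show ?thesis
    by (rule eta_Binder[of Lam, rotated 4]) (use z x0 x1 fvc in \<open>auto simp: fv_plug\<close>)
qed

lemma eta_rel_capture:
  assumes "eta_ctx K C0 C1" "eta_rel K (Shift k0 t0) (Shift k1 t1)" "x0 \<notin> fvc C0" "x1 \<notin> fvc C1"
  shows "eta_rel K (Reset (subst (Lam x0 (plug C0 (Var x0))) k0 t0))
                   (Reset (subst (Lam x1 (plug C1 (Var x1))) k1 t1))"
  using assms by (intro eta_Reset eta_rel_subst_binder[of Shift] eta_rel_Lam_plug) simp_all

lemma eta_rel_step_shift:
  assumes c: "eta_rel K (plug E (Reset (plug F (Shift k t)))) u1"
    and "is_ectx E" "is_pctx F" "x \<notin> fvc F"
  obtains u1' where "step u1 u1'" "eta_rel K (plug E (Reset (subst (Lam x (Reset (plug F (Var x)))) k t))) u1'"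
proof -
  obtain X s1 where u1: "u1 = plug X s1" and X: "eta_ctx K (ccomp E (CReset F)) X"
    and s1: "eta_rel K (Shift k t) s1"
    using eta_rel_decomp[OF c, of "ccomp E (CReset F)" "Shift k t"]
    unfolding eta_decomp_def by (auto simp: plug_ccomp)
  obtain k1 t1 where s1_eq: "s1 = Shift k1 t1" by (rule eta_rel_binder_inv[OF binder_Shift s1])
  obtain E1 F1 where X_eq: "X = ccomp E1 (CReset F1)" and E1: "eta_ctx K E E1"
    and F1: "eta_ctx K (CReset F) (CReset F1)"
    using eta_ctx_split[OF X] by blast
  have "is_pctx F1" "is_ectx E1"
    using F1 E1 assms by (simp_all add: eta_ctx_CReset_is_pctx eta_ctx_is_ectx)
  moreover define x1 where "x1 = fresh (fvc F1)"
  moreover have "x1 \<notin> fvc F1" unfolding x1_def by (rule fresh_notin) simp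
  ultimately have "step u1 (plug E1 (Reset (subst (Lam x1 (Reset (plug F1 (Var x1)))) k1 t1)))"
    using step.shift u1 X_eq s1_eq by (simp add: plug_ccomp)
  moreover have "eta_rel K (Reset (subst (Lam x (plug (CReset F) (Var x))) k t))
                           (Reset (subst (Lam x1 (plug (CReset F1) (Var x1))) k1 t1))"
    using eta_rel_capture[OF F1] s1 s1_eq assms \<open>x1 \<notin> fvc F1\<close> by simp
  ultimately show ?thesis
    using that eta_ctx_plug[OF E1] by simp
qed

lemma eta_rel_step_shift_inv:
  assumes c: "eta_rel K u0 (plug E1 (Reset (plug F1 (Shift k1 t1))))"
    and "is_ectx E1" "is_pctx F1" "x1 \<notin> fvc F1"
  obtains u0' where "step u0 u0'" "eta_rel K u0' (plug E1 (Reset (subst (Lam x1 (Reset (plug F1 (Var x1)))) k1 t1)))"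
proof -
  obtain X s0 where u0: "u0 = plug X s0" and X: "eta_ctx K X (ccomp E1 (CReset F1))"
    and s0: "eta_rel K s0 (Shift k1 t1)"
    using eta_rel_decomp_inv[OF c, of "ccomp E1 (CReset F1)" "Shift k1 t1"]
    unfolding eta_decomp_inv_def by (auto simp: plug_ccomp)
  obtain k0 t0 where s0_eq: "s0 = Shift k0 t0" by (rule eta_rel_binder_inv2[OF binder_Shift s0])
  obtain E0 F0 where X_eq: "X = ccomp E0 (CReset F0)" and E0: "eta_ctx K E0 E1"
    and F0: "eta_ctx K (CReset F0) (CReset F1)"
    using eta_ctx_split_inv[OF X] by blast
  have "is_pctx F0" "is_ectx E0"
    using F0 E0 assms by (simp_all add: eta_ctx_CReset_is_pctx eta_ctx_is_ectx)
  moreover define x0 where "x0 = fresh (fvc F0)"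
  moreover have "x0 \<notin> fvc F0" unfolding x0_def by (rule fresh_notin) simp
  ultimately have "step u0 (plug E0 (Reset (subst (Lam x0 (Reset (plug F0 (Var x0)))) k0 t0)))"
    using step.shift u0 X_eq s0_eq by (simp add: plug_ccomp)
  moreover have "eta_rel K (Reset (subst (Lam x0 (plug (CReset F0) (Var x0))) k0 t0))
                           (Reset (subst (Lam x1 (plug (CReset F1) (Var x1))) k1 t1))"
    using eta_rel_capture[OF F0] s0 s0_eq assms \<open>x0 \<notin> fvc F0\<close> by simp
  ultimately show ?thesis
    using that eta_ctx_plug[OF E0] by simp
qed

lemma eta_rel_step:
  assumes c: "eta_rel K u0 u1" and "step u0 u0'"
  obtains u1' where "step u1 u1'" "eta_rel K u0' u1'"
  using assms(2)
proof (cases rule: step.cases)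
  case (beta E v x t)
  then obtain E1 r1 where u1: "u1 = plug E1 r1" and E1: "eta_ctx K E E1"
    and r1: "eta_rel K (App (Lam x t) v) r1"
    using eta_rel_decomp[OF c] unfolding eta_decomp_def by fastforce
  then obtain l1 v1 where l1: "r1 = App l1 v1" "eta_rel K (Lam x t) l1" and v1: "eta_rel K v v1"
    using eta_rel_App_inv by blast
  obtain x1 t1 where "l1 = Lam x1 t1" by (rule eta_rel_binder_inv[OF binder_Lam l1(2)])
  moreover have "is_ectx E1" "is_val v1"
    using E1 v1 beta by (simp_all add: eta_ctx_is_ectx eta_rel_is_val)
  moreover have "eta_rel K (subst v x t) (subst v1 x1 t1)"
    using l1 v1 \<open>l1 = Lam x1 t1\<close> by (auto intro: eta_rel_subst_binder[of Lam])
  ultimately show ?thesis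
    using that u1 l1 E1 beta step.beta by (metis eta_ctx_plug)
next
  case (shift E F x k t)
  then show ?thesis using that eta_rel_step_shift c by metis
next
  case (reset E v)
  then obtain E1 r1 where u1: "u1 = plug E1 r1" and E1: "eta_ctx K E E1" and r1: "eta_rel K (Reset v) r1"
    using eta_rel_decomp[OF c] unfolding eta_decomp_def by fastforce
  then obtain v1 where "r1 = Reset v1" "eta_rel K v v1"
    using eta_rel_Reset_val_inv reset by blast
  moreover have "is_ectx E1" using E1 reset by (simp add: eta_ctx_is_ectx)
  ultimately show ?thesis
    using that u1 E1 reset step.reset eta_rel_is_val by (metis eta_ctx_plug)
qed

lemma eta_rel_step_inv:
  assumes c: "eta_rel K u0 u1" and "step u1 u1'"
  obtains (step) u0' where "step u0 u0'" "eta_rel K u0' u1'"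
  | (eta) E0 E1 m0 m1 where "is_ectx E0" "is_val m0" "eta_ctx K E0 E1" "eta_rel K m0 m1"
      "u0 = plug E0 (Reset (App (Var K) m0))" "u1' = plug E1 (Reset (Reset (App (Var K) m1)))"
  using assms(2)
proof (cases rule: step.cases)
  case (beta E1 v1 x1 t1)
  have "eta_decomp_inv K u0 E1 (App (Lam x1 t1) v1)"
    using eta_rel_decomp_inv[OF c] beta by simp
  then consider
      (plain) E0 r0 where "u0 = plug E0 r0" "eta_ctx K E0 E1" "eta_rel K r0 (App (Lam x1 t1) v1)"
    | (cont) E0 E1' y m0 where "E1 = ccomp E1' (CReset Hole)" "App (Lam x1 t1) v1 = App (cont_eta K y) v1"
        "y \<noteq> K" "u0 = plug E0 (Reset (App (Var K) m0))" "eta_ctx K E0 E1'" "eta_rel K m0 v1"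
    unfolding eta_decomp_inv_def by auto
  then show ?thesis
  proof cases
    case plain
    then obtain l0 v0 where l0: "r0 = App l0 v0" "eta_rel K l0 (Lam x1 t1)" and v0: "eta_rel K v0 v1"
      using eta_rel_App_inv2 by blast
    obtain x0 t0 where "l0 = Lam x0 t0" by (rule eta_rel_binder_inv2[OF binder_Lam l0(2)])
    moreover have "is_ectx E0" "is_val v0"
      using plain v0 beta by (simp_all add: eta_ctx_is_ectx eta_rel_is_val)
    moreover have "eta_rel K (subst v0 x0 t0) (subst v1 x1 t1)"
      using l0 v0 \<open>l0 = Lam x0 t0\<close> by (auto intro: eta_rel_subst_binder[of Lam])
    ultimately show ?thesis
      using that(1) plain l0 beta step.beta by (metis eta_ctx_plug)
  next
    case cont
    then have "x1 = y" "t1 = Reset (App (Var K) (Var y))" by (auto simp: cont_eta_def)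
    moreover have "is_ectx E0" "is_val m0"
      using cont beta by (simp_all add: eta_ctx_is_ectx eta_rel_is_val)
    ultimately show ?thesis
      using that(2) cont beta by (simp add: subst_def plug_ccomp)
  qed
next
  case (shift E1 F1 x1 k1 t1)
  then show ?thesis using that(1) eta_rel_step_shift_inv c by metis
next
  case (reset E1 v1)
  then obtain E0 r0 where u0: "u0 = plug E0 r0" and E0: "eta_ctx K E0 E1" and r0: "eta_rel K r0 (Reset v1)"
    using eta_rel_decomp_inv[OF c] unfolding eta_decomp_inv_def by fastforce
  then obtain v0 where "r0 = Reset v0" "eta_rel K v0 v1"
    using eta_rel_Reset_val_inv2 reset by blast
  moreover have "is_ectx E0" using E0 reset by (simp add: eta_ctx_is_ectx)
  ultimately show ?thesis
    using that(1) u0 E0 reset step.reset eta_rel_is_val by (metis eta_ctx_plug)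
qed

section \<open>Substituting the eta-expanded continuation\<close>

lemma eta_rel_cont_eta_subst:
  assumes k': "k' \<notin> fvc F" and x: "x \<notin> fvc F" "x \<noteq> k'"
    and K: "K \<notin> fvc F" and y: "y \<noteq> K" "y \<notin> fvc F"
  shows "eta_rel K (Lam y (Reset (App (Var K) (plug F (Var y)))))
                   (subst (cont_eta K y) k' (Lam x (Reset (App (Var k') (plug F (Var x))))))"
proof -
  define b where "b = Reset (App (Var k') (plug F (Var x)))"
  define \<rho> where "\<rho> = Var(k' := cont_eta K y)"
  define xc where "xc = fresh (\<Union>w\<in>fv b - {x}. fv (\<rho> w))"
  have xc: "xc \<notin> (\<Union>w\<in>fv b - {x}. fv (\<rho> w))"
    unfolding xc_def by (rule fresh_bound)
  have sub_Lam: "subst (cont_eta K y) k' (Lam x b) = Lam xc (sub (\<rho>(x := Var xc)) b)"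
    unfolding subst_def \<rho>_def xc_def by (simp add: Let_def)
  have "k' \<in> fv b - {x}" "K \<in> fv (\<rho> k')"
    using x y by (simp_all add: b_def \<rho>_def)
  then have xc_K: "xc \<noteq> K" using xc by blast
  have xc_F: "xc \<notin> fvc F"
  proof
    assume "xc \<in> fvc F"
    then have "xc \<in> fv b - {x}" "\<rho> xc = Var xc"
      using x k' by (auto simp: b_def fv_plug \<rho>_def)
    then show False using xc by force
  qed
  define z where "z = fresh (fv (Lam y (Reset (App (Var K) (plug F (Var y))))) \<union> fv (Lam xc (sub (\<rho>(x := Var xc)) b)) \<union> {K})"
  have z: "z \<notin> fv (Lam y (Reset (App (Var K) (plug F (Var y))))) \<union> fv (Lam xc (sub (\<rho>(x := Var xc)) b)) \<union> {K}"
    unfolding z_def by (rule fresh_notin) simp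
  define G where "G = subc Var F"
  have left: "sub (Var(y := Var z)) (Reset (App (Var K) (plug F (Var y)))) = Reset (App (Var K) (plug G (Var z)))"
  proof -
    have "subc (Var(y := Var z)) F = G" unfolding G_def by (rule subc_cong) (use y in auto)
    then show ?thesis using y by (simp add: sub_plug)
  qed
  obtain y' where y': "y' \<noteq> K" "sub (Var(xc := Var z)) (cont_eta K y) = cont_eta K y'"
    using sub_cont_eta[of "Var(xc := Var z)" K y] xc_K y by auto
  have right: "sub (Var(xc := Var z)) (sub (\<rho>(x := Var xc)) b) = Reset (App (cont_eta K y') (plug G (Var z)))"
  proof -
    have "subc (\<lambda>w. sub (Var(xc := Var z)) ((\<rho>(x := Var xc)) w)) F = G"
      unfolding G_def by (rule subc_cong) (use x k' xc_F in \<open>auto simp: \<rho>_def\<close>)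
    then show ?thesis
      unfolding sub_comp using x y' by (simp add: b_def sub_plug \<rho>_def)
  qed
  have "eta_rel K (Reset (App (Var K) (plug G (Var z)))) (Reset (App (cont_eta K y') (plug G (Var z))))"
    by (rule eta_cont[OF y'(1)], rule eta_rel_refl) (use z K in \<open>auto simp: fv_plug G_def fvc_subc\<close>)
  then have "eta_rel K (sub (Var(y := Var z)) (Reset (App (Var K) (plug F (Var y)))))
                      (sub (Var(xc := Var z)) (sub (\<rho>(x := Var xc)) b))"
    unfolding left right .
  then have "eta_rel K (Lam y (Reset (App (Var K) (plug F (Var y))))) (Lam xc (sub (\<rho>(x := Var xc)) b))"
    by (rule eta_Binder[where B = Lam and z = z, rotated 4]) (use z in auto)
  then show ?thesis using sub_Lam by (simp only: b_def)
qed

lemma subst_subst_fresh: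
  "k' \<notin> fv t \<Longrightarrow> subst v k' (subst u k t) = sub (Var(k := subst v k' u)) t"
  unfolding subst_def sub_comp by (rule sub_cong) auto

lemma eta_rel_cont_eta_capture:
  assumes k': "k' \<notin> fvc F \<union> fv t" and x: "x \<notin> fvc F" "x \<noteq> k'"
    and K: "K \<notin> fv t" "K \<notin> fvc F" and y: "y \<noteq> K" "y \<notin> fvc F"
  shows "eta_rel K (Reset (subst (Lam y (Reset (App (Var K) (plug F (Var y))))) k t))
           (Reset (subst (cont_eta K y) k' (subst (Lam x (Reset (App (Var k') (plug F (Var x))))) k t)))"
proof -
  have "eta_rel K (Lam y (Reset (App (Var K) (plug F (Var y)))))
          (subst (cont_eta K y) k' (Lam x (Reset (App (Var k') (plug F (Var x))))))"
    using k' by (intro eta_rel_cont_eta_subst x K y) simp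
  then have "eta_rel K (sub (Var(k := Lam y (Reset (App (Var K) (plug F (Var y)))))) t)
     (sub (Var(k := subst (cont_eta K y) k' (Lam x (Reset (App (Var k') (plug F (Var x))))))) t)"
    by (intro eta_rel_sub[OF eta_rel_refl[OF K(1)]]) (use K(1) in \<open>auto simp: rel_subst_def intro: eta_Var\<close>)
  moreover have "subst (cont_eta K y) k' (subst (Lam x (Reset (App (Var k') (plug F (Var x))))) k t)
    = sub (Var(k := subst (cont_eta K y) k' (Lam x (Reset (App (Var k') (plug F (Var x))))))) t"
    using k' by (intro subst_subst_fresh) simp
  ultimately show ?thesis
    by (metis eta_Reset subst_def)
qed

section \<open>Refined normal form bisimulations\<close>

lemma ctx_rel_mono: "ctx_rel R E0 E1 \<Longrightarrow> (\<And>a b. R a b \<Longrightarrow> R' a b) \<Longrightarrow> ctx_rel R' E0 E1"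
  unfolding ctx_rel_def by blast

lemma rnf_mono: "rnf R a b \<Longrightarrow> (\<And>a b. R a b \<Longrightarrow> R' a b) \<Longrightarrow> rnf R' a b"
proof (induct rule: rnf.induct)
  case (rnf_open E0 E1 v0 v1 x)
  then show ?case using ctx_rel_mono[OF rnf_open(5)] by (auto intro: rnf.rnf_open)
qed (auto intro: rnf.intros)

lemma ctx_rel_conversep: "ctx_rel R E0 E1 \<Longrightarrow> ctx_rel (conversep R) E1 E0"
  unfolding ctx_rel_def by blast

lemma rnf_conversep: "rnf R a b \<Longrightarrow> rnf (conversep R) b a"
proof (induct rule: rnf.induct)
  case (rnf_open E0 E1 v0 v1 x)
  then show ?case by (intro rnf.rnf_open ctx_rel_conversep) auto
qed (auto intro: rnf.intros)

lemma rnf_sim_extend: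
  assumes "rnf_sim R" "irreducible a" "irreducible b" "rnf R' a b" "\<And>u v. R u v \<Longrightarrow> R' u v"
    and "\<And>u v. R' u v \<Longrightarrow> R u v \<or> (u = a \<and> v = b)"
  shows "rnf_sim R'"
  unfolding rnf_sim_def
proof (intro allI impI)
  fix t0 t1 t0' assume R': "R' t0 t1" and ev: "eval t0 t0'"
  show "\<exists>t1'. eval t1 t1' \<and> rnf R' t0' t1'"
  proof (cases "R t0 t1")
    case True
    with assms(1) ev obtain t1' where "eval t1 t1'" "rnf R t0' t1'"
      unfolding rnf_sim_def by blast
    then show ?thesis using rnf_mono[of R t0' t1' R'] assms(5) by blast
  next
    case False
    then have "t0 = a" "t1 = b" using assms(6) R' by blast+
    with ev assms(2) have "t0' = a" by (simp add: eval_irreducible)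
    then show ?thesis using \<open>t1 = b\<close> assms(3,4) eval_irreducible by blast
  qed
qed

lemma rnf_bisimilar_normal_forms:
  assumes R: "rnf_bisim R" and a: "irreducible a" and b: "irreducible b" and ab: "rnf R a b"
  shows "rnf_bisimilar a b"
proof -
  define R' where "R' = (\<lambda>u v. R u v \<or> (u = a \<and> v = b))"
  have R'_ab: "rnf R' a b" using ab by (rule rnf_mono) (simp add: R'_def)
  have "rnf_sim R'"
  proof (rule rnf_sim_extend[OF _ a b R'_ab])
    show "rnf_sim R" using R by (simp add: rnf_bisim_def)
  qed (simp_all add: R'_def)
  moreover have "rnf_sim (conversep R')"
  proof (rule rnf_sim_extend[OF _ b a rnf_conversep[OF R'_ab]])
    show "rnf_sim (conversep R)" using R by (simp add: rnf_bisim_def)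
  qed (auto simp: R'_def)
  moreover have "R' a b" by (simp add: R'_def)
  ultimately show ?thesis
    unfolding rnf_bisimilar_def rnf_bisim_def by blast
qed

section \<open>The bisimulation\<close>

text \<open>The extra pairs come from comparing the contexts of the stuck terms \<open>E0[\<langle>K v\<rangle>]\<close> and
  \<open>E1[\<langle>\<langle>K v\<rangle>\<rangle>]\<close>, the latter reached by contracting \<open>\<langle>(\<lambda>y. \<langle>K y\<rangle>) v\<rangle>\<close>.\<close>

definition eta_rel_up :: "nat \<Rightarrow> trm \<Rightarrow> trm \<Rightarrow> bool" where
  "eta_rel_up K u0 u1 \<longleftrightarrow> eta_rel K u0 u1 \<or>
     (\<exists>E z. is_ectx E \<and> u1 = plug E (Reset (Var z)) \<and> eta_rel K u0 (plug E (Var z)))"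

lemma eta_rel_imp_up: "eta_rel K u0 u1 \<Longrightarrow> eta_rel_up K u0 u1"
  by (simp add: eta_rel_up_def)

lemma rnf_eta_val:
  assumes c: "eta_rel K v0 v1" and v: "is_val v0"
  shows "rnf (eta_rel_up K) v0 v1"
proof -
  define x where "x = fresh (fv v0 \<union> {K})"
  have x: "x \<notin> fv v0 \<union> {K}" unfolding x_def by (rule fresh_notin) simp
  have "eta_rel K (vapp v0 x) (vapp v1 x)"
  proof (cases v0)
    case (Var w)
    then show ?thesis using c x eta_rel_Var_inv[of K w v1] by (auto intro: eta_App eta_Var)
  next
    case (Lam z b)
    with c obtain z1 b1 where "v1 = Lam z1 b1" using eta_rel_binder_inv[OF binder_Lam] by metis
    then show ?thesis
      using Lam c x eta_rel_subst_binder[of Lam K z b z1 b1 "Var x" "Var x"] by (simp add: eta_Var)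
  qed (use v in auto)
  then show ?thesis
    using x v eta_rel_fv[OF c] eta_rel_is_val[OF c] by (intro rnf_val[of v0 v1 x]) (auto intro: eta_rel_imp_up)
qed

lemma ctx_rel_eta_ctx:
  assumes c: "eta_ctx K E E1" and E: "is_ectx E"
  shows "ctx_rel (eta_rel_up K) E E1"
proof -
  define z where "z = fresh (fvc E \<union> {K})"
  have z: "z \<notin> fvc E \<union> {K}" unfolding z_def by (rule fresh_notin) simp
  then have z1: "z \<notin> fvc E1" using eta_ctx_fvc[OF c] by simp
  have Vz: "eta_rel K (Var z) (Var z)" using z by (auto intro: eta_Var)
  from is_ectx_split[OF E] show ?thesis
  proof
    assume "is_pctx E"
    then show ?thesis
      unfolding ctx_rel_def using z z1 c eta_ctx_is_pctx eta_ctx_plug[OF c Vz] eta_rel_imp_up by blast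
  next
    assume "\<exists>E' F. is_ectx E' \<and> is_pctx F \<and> E = ccomp E' (CReset F)"
    then obtain E' F where h: "is_ectx E'" "is_pctx F" "E = ccomp E' (CReset F)" by blast
    with eta_ctx_split[OF c] obtain E1' F1 where h1: "E1 = ccomp E1' (CReset F1)" "eta_ctx K E' E1'"
      "eta_ctx K (CReset F) (CReset F1)" by blast
    have "is_pctx F1" "is_ectx E1'"
      using h h1 by (simp_all add: eta_ctx_CReset_is_pctx eta_ctx_is_ectx)
    moreover have "eta_rel_up K (plug E' (Var z)) (plug E1' (Var z))"
      "eta_rel_up K (Reset (plug F (Var z))) (Reset (plug F1 (Var z)))"
      using eta_ctx_plug[OF h1(2) Vz] eta_ctx_plug[OF h1(3) Vz] by (simp_all add: eta_rel_imp_up)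
    ultimately show ?thesis
      unfolding ctx_rel_def using h h1(1) z z1 by blast
  qed
qed

lemma rnf_eta_open_cont:
  assumes E0: "is_ectx E0" and c: "eta_ctx K E0 E1" and m: "eta_rel K m0 m1" and v: "is_val m0"
  shows "rnf (eta_rel_up K) (plug E0 (Reset (App (Var K) m0))) (plug E1 (Reset (Reset (App (Var K) m1))))"
proof -
  have E1: "is_ectx E1" using eta_ctx_is_ectx[OF c] E0 by simp
  define z where "z = fresh (fvc E0 \<union> {K})"
  have z: "z \<notin> fvc E0 \<union> {K}" unfolding z_def by (rule fresh_notin) simp
  have Vz: "eta_rel K (Var z) (Var z)" using z by (auto intro: eta_Var)
  have "eta_rel_up K (plug E0 (Var z)) (plug (ccomp E1 (CReset Hole)) (Var z))"
    unfolding eta_rel_up_def using E1 eta_ctx_plug[OF c Vz] by (auto simp: plug_ccomp)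
  moreover have "eta_rel_up K (Reset (plug Hole (Var z))) (Reset (plug Hole (Var z)))"
    using Vz by (simp add: eta_rel_imp_up eta_Reset)
  moreover have "ccomp E1 (CReset (CReset Hole)) = ccomp (ccomp E1 (CReset Hole)) (CReset Hole)"
    by (simp add: ccomp_assoc)
  moreover have "z \<notin> fvc (ccomp E0 (CReset Hole))" "z \<notin> fvc (ccomp E1 (CReset (CReset Hole)))"
    using z eta_ctx_fvc[OF c] by (simp_all add: fvc_ccomp)
  ultimately have "ctx_rel (eta_rel_up K) (ccomp E0 (CReset Hole)) (ccomp E1 (CReset (CReset Hole)))"
    unfolding ctx_rel_def using E0 E1
    by (intro disjI1 exI[of _ E0] exI[of _ Hole] exI[of _ "ccomp E1 (CReset Hole)"] exI[of _ Hole] exI[of _ z])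
      simp
  then have "rnf (eta_rel_up K) (plug (ccomp E0 (CReset Hole)) (App (Var K) m0))
                                 (plug (ccomp E1 (CReset (CReset Hole))) (App (Var K) m1))"
    by (rule rnf_open[rotated 4]) (use E0 E1 v eta_rel_is_val[OF m] rnf_eta_val[OF m v] in simp_all)
  then show ?thesis by (simp add: plug_ccomp)
qed

lemma rnf_eta_ctrl:
  assumes F: "is_pctx F" and c: "eta_rel K (plug F (Shift k t)) m"
  shows "\<exists>n1. eval m n1 \<and> rnf (eta_rel_up K) (plug F (Shift k t)) n1"
proof -
  obtain F1 s1 where m: "m = plug F1 s1" and F1: "eta_ctx K F F1" and s1: "eta_rel K (Shift k t) s1"
    using eta_rel_decomp[OF c refl] unfolding eta_decomp_def by auto
  obtain k1 t1 where s1_eq: "s1 = Shift k1 t1" by (rule eta_rel_binder_inv[OF binder_Shift s1])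
  have F1_pure: "is_pctx F1" using eta_ctx_is_pctx[OF F1] F by simp
  define k3 where "k3 = fresh (fv (plug F (Shift k t)) \<union> {K})"
  have k3: "k3 \<notin> fv (plug F (Shift k t)) \<union> {K}" unfolding k3_def by (rule fresh_notin) simp
  define x3 where "x3 = fresh (fv (plug F (Shift k t)) \<union> {K, k3})"
  have x3: "x3 \<notin> fv (plug F (Shift k t)) \<union> {K, k3}" unfolding x3_def by (rule fresh_notin) simp
  have fv_m: "fv (plug F1 (Shift k1 t1)) = fv (plug F (Shift k t))"
    using eta_rel_fv[OF c] m s1_eq by simp
  have "eta_ctx K (CReset (CAppR (Var k3) F)) (CReset (CAppR (Var k3) F1))"
    using k3 F1 by (auto intro: etac_Reset etac_AppR eta_Var)
  then have "eta_rel K (Reset (subst (Lam x3 (Reset (App (Var k3) (plug F (Var x3))))) k t))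
                       (Reset (subst (Lam x3 (Reset (App (Var k3) (plug F1 (Var x3))))) k1 t1))"
    using eta_rel_capture s1 s1_eq x3 eta_ctx_fvc[OF F1] by (fastforce simp: fv_plug)
  then have "rnf (eta_rel_up K) (plug F (Shift k t)) (plug F1 (Shift k1 t1))"
    using k3 x3 fv_m by (intro rnf_ctrl F F1_pure eta_rel_imp_up) auto
  moreover have "eval m m"
    using irreducible_ctrl[OF F1_pure] m s1_eq eval_irreducible by simp
  ultimately show ?thesis using m s1_eq by blast
qed

lemma rnf_eta_open:
  assumes E: "is_ectx E" and v: "is_val v" and c: "eta_rel K (plug E (App (Var x) v)) m"
  shows "\<exists>n1. eval m n1 \<and> rnf (eta_rel_up K) (plug E (App (Var x) v)) n1"
proof -
  have "eta_decomp K E (App (Var x) v) m" by (rule eta_rel_decomp[OF c refl]) simp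
  then consider
      (plain) E1 r1 where "m = plug E1 r1" "eta_ctx K E E1" "eta_rel K (App (Var x) v) r1"
    | (cont) E0 E1 y m1 where "x = K" "E = ccomp E0 (CReset Hole)" "m = plug E1 (Reset (App (cont_eta K y) m1))"
        "y \<noteq> K" "eta_ctx K E0 E1" "eta_rel K v m1"
    unfolding eta_decomp_def by auto
  then show ?thesis
  proof cases
    case plain
    then obtain v1 where r1: "r1 = App (Var x) v1" and v1: "eta_rel K v v1"
      using eta_rel_App_inv eta_rel_Var_inv by blast
    have "is_ectx E1" "is_val v1"
      using plain v1 E v by (simp_all add: eta_ctx_is_ectx eta_rel_is_val)
    then have "eval m m" using irreducible_open plain r1 eval_irreducible by simp
    moreover have "rnf (eta_rel_up K) (plug E (App (Var x) v)) (plug E1 (App (Var x) v1))"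
      by (rule rnf_open) (use E v plain v1 \<open>is_ectx E1\<close> \<open>is_val v1\<close> in
        \<open>simp_all add: ctx_rel_eta_ctx rnf_eta_val\<close>)
    ultimately show ?thesis using plain r1 by blast
  next
    case cont
    have E0: "is_ectx E0" and E1: "is_ectx E1" and m1: "is_val m1"
      using cont E v by (simp_all add: eta_ctx_is_ectx eta_rel_is_val)
    have "step m (plug E1 (Reset (Reset (App (Var K) m1))))"
      using step.beta[of "ccomp E1 (CReset Hole)" m1 y "Reset (App (Var K) (Var y))"] cont E1 m1
      by (simp add: cont_eta_def subst_def plug_ccomp)
    moreover have "irreducible (plug E1 (Reset (Reset (App (Var K) m1))))"
      using irreducible_open[of "ccomp E1 (CReset (CReset Hole))" m1 K] E1 m1 by (simp add: plug_ccomp)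
    ultimately have "eval m (plug E1 (Reset (Reset (App (Var K) m1))))"
      using eval_irreducible eval_step by blast
    moreover have "rnf (eta_rel_up K) (plug E0 (Reset (App (Var K) v))) (plug E1 (Reset (Reset (App (Var K) m1))))"
      using rnf_eta_open_cont E0 cont v by blast
    ultimately show ?thesis using cont by (auto simp: plug_ccomp)
  qed
qed

lemma rnf_eta_irreducible:
  assumes c: "eta_rel K n0 m" and irr: "irreducible n0"
  shows "\<exists>n1. eval m n1 \<and> rnf (eta_rel_up K) n0 n1"
  using progress[of n0]
proof (elim disjE exE conjE)
  fix w assume "step n0 w"
  then show ?thesis using irr unfolding irreducible_def by blast
next
  assume "is_val n0"
  then show ?thesis
    using c rnf_eta_val eta_rel_is_val irreducible_val eval_irreducible by metis
next
  fix F k t assume "is_pctx F" "n0 = plug F (Shift k t)"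
  then show ?thesis using c rnf_eta_ctrl by blast
next
  fix E x v assume "is_ectx E" "is_val v" "n0 = plug E (App (Var x) v)"
  then show ?thesis using c rnf_eta_open by blast
qed

lemma eta_rel_sim:
  assumes "eta_rel K u0 u1" "eval u0 n0"
  shows "\<exists>n1. eval u1 n1 \<and> rnf (eta_rel_up K) n0 n1"
proof -
  have steps: "step\<^sup>*\<^sup>* u0 n0" and irr: "irreducible n0" using assms(2) unfolding eval_def by auto
  from steps assms(1) show ?thesis
  proof (induct arbitrary: u1 rule: converse_rtranclp_induct)
    case base
    then show ?case using rnf_eta_irreducible irr by blast
  next
    case (step u0 u0')
    obtain u1' where "step u1 u1'" "eta_rel K u0' u1'" by (rule eta_rel_step[OF step.prems step.hyps(1)])
    then show ?case using step.hyps(3) eval_step by blast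
  qed
qed

lemma eta_rel_sim_inv:
  assumes "eta_rel K u0 u1" "eval u1 n1"
  shows "\<exists>n0. eval u0 n0 \<and> rnf (eta_rel_up K) n0 n1"
proof -
  have steps: "step\<^sup>*\<^sup>* u1 n1" and irr: "irreducible n1" using assms(2) unfolding eval_def by auto
  from steps assms(1) show ?thesis
  proof (induct arbitrary: u0 rule: converse_rtranclp_induct)
    case base
    have irr0: "irreducible u0"
      unfolding irreducible_def
    proof
      assume "\<exists>w. step u0 w"
      then obtain w where "step u0 w" by blast
      then obtain u1' where "step n1 u1'" by (rule eta_rel_step[OF base])
      then show False using irr unfolding irreducible_def by blast
    qed
    obtain n1' where "eval n1 n1'" "rnf (eta_rel_up K) u0 n1'"
      using rnf_eta_irreducible[OF base irr0] by blast
    moreover have "n1' = n1" using \<open>eval n1 n1'\<close> eval_irreducible[OF irr] by simp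
    ultimately show ?case using eval_irreducible[OF irr0] by blast
  next
    case (step u1 u1')
    from step.prems step.hyps(1) show ?case
    proof (cases rule: eta_rel_step_inv)
      case (step u0')
      then show ?thesis using step.hyps(1,3) eval_step by blast
    next
      case (eta E0 E1 m0 m1)
      have E1: "is_ectx E1" and m1: "is_val m1"
        using eta by (simp_all add: eta_ctx_is_ectx eta_rel_is_val)
      have "irreducible u1'"
        using irreducible_open[of "ccomp E1 (CReset (CReset Hole))" m1 K] E1 m1 eta
        by (simp add: plug_ccomp)
      moreover have "eval u1' n1" using step.hyps(2) irr unfolding eval_def by simp
      ultimately have "n1 = u1'" by (simp add: eval_irreducible)
      moreover have "irreducible u0"
        using irreducible_open[of "ccomp E0 (CReset Hole)" m0 K] eta by (simp add: plug_ccomp)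
      then have "eval u0 u0" by (simp add: eval_irreducible)
      ultimately show ?thesis
        using rnf_eta_open_cont[OF eta(1,3,4,2)] eta(5,6) by blast
    qed
  qed
qed

lemma eta_rel_up_bisim: "rnf_bisim (eta_rel_up K)"
  unfolding rnf_bisim_def rnf_sim_def
proof (intro conjI allI impI)
  fix u0 u1 n0 assume R: "eta_rel_up K u0 u1" and ev: "eval u0 n0"
  from R[unfolded eta_rel_up_def] show "\<exists>n1. eval u1 n1 \<and> rnf (eta_rel_up K) n0 n1"
  proof (elim disjE exE conjE)
    assume "eta_rel K u0 u1"
    then show ?thesis using eta_rel_sim ev by blast
  next
    fix E z assume E: "is_ectx E" and u1: "u1 = plug E (Reset (Var z))" and c: "eta_rel K u0 (plug E (Var z))"
    obtain n1 where "eval (plug E (Var z)) n1" "rnf (eta_rel_up K) n0 n1"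
      using eta_rel_sim[OF c ev] by blast
    moreover have "step u1 (plug E (Var z))" using step.reset[OF E, of "Var z"] u1 by simp
    ultimately show ?thesis using eval_step by blast
  qed
next
  fix u1 u0 n1 assume "conversep (eta_rel_up K) u1 u0" and ev: "eval u1 n1"
  then have R: "eta_rel_up K u0 u1" by simp
  from R[unfolded eta_rel_up_def] obtain n0 where "eval u0 n0" "rnf (eta_rel_up K) n0 n1"
  proof (elim disjE exE conjE)
    assume "eta_rel K u0 u1"
    then show ?thesis using eta_rel_sim_inv ev that by blast
  next
    fix E z assume E: "is_ectx E" and u1: "u1 = plug E (Reset (Var z))" and c: "eta_rel K u0 (plug E (Var z))"
    have "step u1 (plug E (Var z))" using step.reset[OF E, of "Var z"] u1 by simp
    then have "eval (plug E (Var z)) n1"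
      by (rule eval_step_deterministic[OF ev]) (use step_reset_unique[OF E, of "Var z"] u1 in simp)
    then show ?thesis using eta_rel_sim_inv[OF c] that by blast
  qed
  then show "\<exists>n0. eval u0 n0 \<and> rnf (conversep (eta_rel_up K)) n1 n0"
    using rnf_conversep[of "eta_rel_up K" n0 n1] by blast
qed

theorem proposition6:
  assumes "is_pctx F"
    and "k' \<notin> fvc F \<union> fv t"
    and "x \<notin> fvc F"
    and "x \<noteq> k'"
  shows "rnf_bisimilar (plug F (Shift k t))
           (Shift k' (subst (Lam x (Reset (App (Var k') (plug F (Var x))))) k t))"
proof -
  define t1 where "t1 = subst (Lam x (Reset (App (Var k') (plug F (Var x))))) k t"
  define K where "K = fresh (fv (plug F (Shift k t)) \<union> fv (Shift k' t1) \<union> {k, k', x})"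
  have K: "K \<notin> fv (plug F (Shift k t)) \<union> fv (Shift k' t1) \<union> {k, k', x}"
    unfolding K_def by (rule fresh_notin) simp
  define y where "y = fresh (fv (plug F (Shift k t)) \<union> fv (Shift k' t1) \<union> {k, k', x, K})"
  have y: "y \<notin> fv (plug F (Shift k t)) \<union> fv (Shift k' t1) \<union> {k, k', x, K}"
    unfolding y_def by (rule fresh_notin) simp
  have "eta_rel K (Reset (subst (Lam y (Reset (App (Var K) (plug F (Var y))))) k t))
                  (Reset (subst (cont_eta K y) k' t1))"
    unfolding t1_def using assms K y by (intro eta_rel_cont_eta_capture) (auto simp: fv_plug)
  then have "rnf (eta_rel_up K) (plug F (Shift k t)) (plug Hole (Shift k' t1))"
    using K y by (intro rnf_ctrl assms(1) eta_rel_imp_up) (auto simp: cont_eta_def)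
  then have "rnf_bisimilar (plug F (Shift k t)) (plug Hole (Shift k' t1))"
    by (intro rnf_bisimilar_normal_forms[OF eta_rel_up_bisim] irreducible_ctrl assms(1)) simp_all
  then show ?thesis by (simp add: t1_def)
qed

end
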